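(* There is an $\mathcal{O}(k^2)$-time PILLAR algorithm that, given a string $X\in\Sigma^n$ and an integer $k\in\mathbb{Z}_{\ge0}$, determines whether $\mathrm{selfed}(X)\le k$ and, if so, retrieves the breakpoint representation of an optimal self-alignment of $X$.
   Context: An alignment of $X$ onto $X$ is a sequence $(x_t,y_t)_{t=0}^m$ from $(0,0)$ to $(|X|,|X|)$ with steps $(1,0)$ (deletion of $X[x_t]$), $(0,1)$ (insertion of $X[y_t]$), $(1,1)$ (aligning $X[x_t]$ to $X[y_t]$; a match if equal, otherwise a substitution). Its unweighted cost is the number of insertions, deletions and substitutions. A self-alignment is such an alignment that never aligns a character $X[x]$ to itself, i.e., contains no step $(x,x)\to(x+1,x+1)$; $\mathrm{selfed}(X)$ is the minimum unweighted cost of a self-alignment, and an optimal self-alignment is one attaining it. The breakpoint representation of an alignment is the subsequence of pairs $(x_t,y_t)$ with $t\in\{0,m\}$ or such that the step from $t$ is not a match. PILLAR model: unit-cost operations Extract, LCP, LCP$^R$, Access, Length on fragments of the input string. *)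

theory Defs
  imports Main
begin

definition is_alignment :: "nat \<Rightarrow> (nat \<times> nat) list \<Rightarrow> bool" where
  "is_alignment n A \<longleftrightarrow> A \<noteq> [] \<and> hd A = (0,0) \<and> last A = (n,n) \<and>
     (\<forall>t < length A - 1.
        (fst (A!(Suc t)) = Suc (fst (A!t)) \<and> snd (A!(Suc t)) = snd (A!t)) \<or>
        (fst (A!(Suc t)) = fst (A!t) \<and> snd (A!(Suc t)) = Suc (snd (A!t))) \<or>
        (fst (A!(Suc t)) = Suc (fst (A!t)) \<and> snd (A!(Suc t)) = Suc (snd (A!t))))"

definition diag_step :: "(nat \<times> nat) list \<Rightarrow> nat \<Rightarrow> bool" where
  "diag_step A t \<longleftrightarrow> fst (A!(Suc t)) = Suc (fst (A!t)) \<and> snd (A!(Suc t)) = Suc (snd (A!t))"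

definition match_step :: "'a list \<Rightarrow> (nat \<times> nat) list \<Rightarrow> nat \<Rightarrow> bool" where
  "match_step X A t \<longleftrightarrow> diag_step A t \<and> X ! fst (A!t) = X ! snd (A!t)"

definition align_cost :: "'a list \<Rightarrow> (nat \<times> nat) list \<Rightarrow> nat" where
  "align_cost X A = card {t. t < length A - 1 \<and> \<not> match_step X A t}"

definition self_alignment :: "'a list \<Rightarrow> (nat \<times> nat) list \<Rightarrow> bool" where
  "self_alignment X A \<longleftrightarrow> is_alignment (length X) A \<and>
     (\<forall>t < length A - 1. diag_step A t \<longrightarrow> fst (A!t) \<noteq> snd (A!t))"

definition selfed :: "'a list \<Rightarrow> nat" where
  "selfed X = (LEAST c. \<exists>A. self_alignment X A \<and> align_cost X A = c)"

definition optimal_self_alignment :: "'a list \<Rightarrow> (nat \<times> nat) list \<Rightarrow> bool" where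
  "optimal_self_alignment X A \<longleftrightarrow> self_alignment X A \<and> align_cost X A = selfed X"

definition breakpoints :: "'a list \<Rightarrow> (nat \<times> nat) list \<Rightarrow> (nat \<times> nat) list" where
  "breakpoints X A =
     map (\<lambda>t. A ! t) (filter (\<lambda>t. t = 0 \<or> t = length A - 1 \<or> \<not> match_step X A t) [0..<length A])"

section \<open>Word RAM with PILLAR oracle access to a single input string X\<close>

fun lcp_len :: "'a list \<Rightarrow> 'a list \<Rightarrow> nat" where
  "lcp_len (a # as) (b # bs) = (if a = b then Suc (lcp_len as bs) else 0)"
| "lcp_len _ _ = 0"

definition frag :: "'a list \<Rightarrow> nat \<Rightarrow> nat \<Rightarrow> 'a list" where
  "frag X a b = drop a (take b X)"

text \<open>Fragments of X are represented by index pairs (a,b) standing for X[a..b), so Extract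
  amounts to index arithmetic.  PAccess d i: reg d := X[i]; PLength d: reg d := |X|;
  PLCP d a b c e: reg d := LCP(X[a..b), X[c..e)); PLCPR likewise for the longest common suffix.
  Each executed instruction costs one unit of time.\<close>
datatype instr =
    LoadConst nat nat
  | Add nat nat nat
  | Sub nat nat nat
  | Mul nat nat nat
  | Div nat nat nat
  | Load nat nat
  | Store nat nat
  | Jmp nat
  | JmpLess nat nat nat
  | Out nat
  | Halt
  | PAccess nat nat
  | PLength nat
  | PLCP nat nat nat nat nat
  | PLCPR nat nat nat nat nat

datatype config = Config (pc: nat) (regs: "nat \<Rightarrow> nat") (mem: "nat \<Rightarrow> nat") (outp: "nat list")

definition halted :: "instr list \<Rightarrow> config \<Rightarrow> bool" where
  "halted P c \<longleftrightarrow> length P \<le> pc c \<or> P ! pc c = Halt"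

fun exec_instr :: "nat \<Rightarrow> nat list \<Rightarrow> instr \<Rightarrow> config \<Rightarrow> config" where
  "exec_instr w X (LoadConst d v) (Config p r m ou) = Config (Suc p) (r(d := v mod 2^w)) m ou"
| "exec_instr w X (Add d a b) (Config p r m ou) = Config (Suc p) (r(d := (r a + r b) mod 2^w)) m ou"
| "exec_instr w X (Sub d a b) (Config p r m ou) = Config (Suc p) (r(d := (r a + 2^w - r b) mod 2^w)) m ou"
| "exec_instr w X (Mul d a b) (Config p r m ou) = Config (Suc p) (r(d := (r a * r b) mod 2^w)) m ou"
| "exec_instr w X (Div d a b) (Config p r m ou) = Config (Suc p) (r(d := r a div r b)) m ou"
| "exec_instr w X (Load d a) (Config p r m ou) = Config (Suc p) (r(d := m (r a))) m ou"
| "exec_instr w X (Store a s) (Config p r m ou) = Config (Suc p) r (m(r a := r s)) ou"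
| "exec_instr w X (Jmp t) (Config p r m ou) = Config t r m ou"
| "exec_instr w X (JmpLess a b t) (Config p r m ou) =
     Config (if r a < r b then t else Suc p) r m ou"
| "exec_instr w X (Out s) (Config p r m ou) = Config (Suc p) r m (ou @ [r s])"
| "exec_instr w X Halt c = c"
| "exec_instr w X (PAccess d i) (Config p r m ou) =
     Config (Suc p) (r(d := (if r i < length X then X ! r i else 0))) m ou"
| "exec_instr w X (PLength d) (Config p r m ou) = Config (Suc p) (r(d := length X)) m ou"
| "exec_instr w X (PLCP d a b c e) (Config p r m ou) =
     Config (Suc p) (r(d := lcp_len (frag X (r a) (r b)) (frag X (r c) (r e)))) m ou"
| "exec_instr w X (PLCPR d a b c e) (Config p r m ou) =
     Config (Suc p) (r(d := lcp_len (rev (frag X (r a) (r b))) (rev (frag X (r c) (r e))))) m ou"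

definition step :: "instr list \<Rightarrow> nat \<Rightarrow> nat list \<Rightarrow> config \<Rightarrow> config" where
  "step P w X c = (if halted P c then c else exec_instr w X (P ! pc c) c)"

definition init_config :: "nat \<Rightarrow> config" where
  "init_config k = Config 0 ((\<lambda>_. 0)(0 := k)) (\<lambda>_. 0) []"

definition run :: "instr list \<Rightarrow> nat \<Rightarrow> nat list \<Rightarrow> nat \<Rightarrow> nat \<Rightarrow> config" where
  "run P w X k t = (step P w X ^^ t) (init_config k)"

definition encode_points :: "(nat \<times> nat) list \<Rightarrow> nat list" where
  "encode_points ps = concat (map (\<lambda>(x,y). [x, y]) ps)"

end

theory Submission
  imports Defs
begin

text \<open>Landau--Vishkin for self-alignments.  For e \<le> k and each diagonal y - x = d with
  |d| \<le> k, record the furthest point of the diagonal that a prefix of a self-alignment of cost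
  at most e reaches.  Row e of this table arises from row e - 1 by one substitution, deletion or
  insertion followed by a maximal slide along the diagonal, i.e. one LCP query; on the main
  diagonal, where X[x] would be aligned to itself, neither substitutions nor slides are allowed.
  Hence selfed X \<le> e iff row e reaches (n, n), and the (k + 1) \<times> (2k + 3) table costs
  O(k^2) time.  An optimal alignment is recovered backwards from (n, n): slide back along
  the diagonal by an LCS query, then step to a neighbour that the table certifies to be
  reachable with one unit less.  Every such step is a breakpoint; at most k of them are pushed
  on a stack and finally output in reverse.\<close>

lemma lcp_len_le: "lcp_len xs ys \<le> length xs \<and> lcp_len xs ys \<le> length ys"
  by (induction xs ys rule: lcp_len.induct) auto

lemma lcp_len_nth: "i < lcp_len xs ys \<Longrightarrow> xs ! i = ys ! i"
proof (induction xs ys arbitrary: i rule: lcp_len.induct)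
  case (1 a as b bs)
  then show ?case by (cases i) (auto split: if_splits)
qed auto

lemma lcp_len_nth_neq:
  "lcp_len xs ys < length xs \<Longrightarrow> lcp_len xs ys < length ys \<Longrightarrow>
   xs ! lcp_len xs ys \<noteq> ys ! lcp_len xs ys"
  by (induction xs ys rule: lcp_len.induct) auto

lemma lcp_len_drop:
  assumes "l = lcp_len (drop a X) (drop b X)"
  shows "\<And>i. i < l \<Longrightarrow> a + i < length X \<and> b + i < length X \<and> X ! (a + i) = X ! (b + i)"
    and "a + l < length X \<Longrightarrow> b + l < length X \<Longrightarrow> X ! (a + l) \<noteq> X ! (b + l)"
proof -
  have le: "l \<le> length (drop a X)" "l \<le> length (drop b X)"
    using lcp_len_le[of "drop a X" "drop b X"] assms by auto
  fix i assume "i < l"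
  then have "drop a X ! i = drop b X ! i" using lcp_len_nth assms by blast
  moreover have "a + i < length X" "b + i < length X" using le \<open>i < l\<close> by auto
  ultimately show "a + i < length X \<and> b + i < length X \<and> X ! (a + i) = X ! (b + i)"
    by (simp add: add.commute)
next
  show "a + l < length X \<Longrightarrow> b + l < length X \<Longrightarrow> X ! (a + l) \<noteq> X ! (b + l)"
    using lcp_len_nth_neq[of "drop a X" "drop b X"] assms by (simp add: add.commute)
qed

definition lcs_len :: "'a list \<Rightarrow> nat \<Rightarrow> nat \<Rightarrow> nat" where
  "lcs_len X x y = lcp_len (rev (frag X 0 x)) (rev (frag X 0 y))"

lemma lcs_len_spec:
  assumes "x \<le> length X" "y \<le> length X" "l = lcs_len X x y"
  shows "l \<le> x" "l \<le> y" "\<And>i. i < l \<Longrightarrow> X ! (x - 1 - i) = X ! (y - 1 - i)"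
    "l < x \<Longrightarrow> l < y \<Longrightarrow> X ! (x - 1 - l) \<noteq> X ! (y - 1 - l)"
proof -
  have f: "frag X 0 x = take x X" "frag X 0 y = take y X" by (simp_all add: frag_def)
  have len: "length (rev (take x X)) = x" "length (rev (take y X)) = y" using assms by auto
  show "l \<le> x" "l \<le> y" using lcp_len_le[of "rev (take x X)" "rev (take y X)"] assms(3) len
    by (auto simp: lcs_len_def f)
  have nth: "rev (take x X) ! i = X ! (x - 1 - i)" if "i < x" for i
    using that assms(1) by (simp add: rev_nth)
  have nth2: "rev (take y X) ! i = X ! (y - 1 - i)" if "i < y" for i
    using that assms(2) by (simp add: rev_nth)
  show "X ! (x - 1 - i) = X ! (y - 1 - i)" if "i < l" for i
  proof -
    have "rev (take x X) ! i = rev (take y X) ! i"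
      using that lcp_len_nth assms(3) by (simp add: lcs_len_def f)
    moreover have "i < x" "i < y" using that \<open>l \<le> x\<close> \<open>l \<le> y\<close> by auto
    ultimately show ?thesis using nth nth2 by simp
  qed
  show "l < x \<Longrightarrow> l < y \<Longrightarrow> X ! (x - 1 - l) \<noteq> X ! (y - 1 - l)"
    using lcp_len_nth_neq[of "rev (take x X)" "rev (take y X)"] assms(3) len nth nth2
    by (simp add: lcs_len_def f)
qed

section \<open>Cost-bounded reachability in the self-alignment grid\<close>

inductive self_reach :: "'a list \<Rightarrow> nat \<times> nat \<Rightarrow> nat \<Rightarrow> bool" for X where
  origin: "self_reach X (0, 0) 0"
| weaken: "self_reach X p c \<Longrightarrow> self_reach X p (Suc c)"
| del: "self_reach X (x, y) c \<Longrightarrow> self_reach X (Suc x, y) (Suc c)"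
| ins: "self_reach X (x, y) c \<Longrightarrow> self_reach X (x, Suc y) (Suc c)"
| sub: "self_reach X (x, y) c \<Longrightarrow> x \<noteq> y \<Longrightarrow> self_reach X (Suc x, Suc y) (Suc c)"
| match: "self_reach X (x, y) c \<Longrightarrow> x \<noteq> y \<Longrightarrow> x < length X \<Longrightarrow> y < length X \<Longrightarrow>
    X ! x = X ! y \<Longrightarrow> self_reach X (Suc x, Suc y) c"

lemma self_reach_near_diagonal: "self_reach X p c \<Longrightarrow> fst p \<le> snd p + c \<and> snd p \<le> fst p + c"
  by (induction rule: self_reach.induct) auto

lemma self_reach_cost_0: "self_reach X p 0 \<Longrightarrow> p = (0, 0)"
  by (induction p "0::nat" rule: self_reach.induct) auto

lemma self_reach_mono: "self_reach X p c \<Longrightarrow> c \<le> c' \<Longrightarrow> self_reach X p c'"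
  by (induction c') (auto simp: le_Suc_eq intro: self_reach.weaken)

lemma self_reach_0_y: "self_reach X (0, y) y"
  by (induction y) (auto intro: self_reach.intros)

lemma self_reach_x_0: "self_reach X (x, 0) x"
  by (induction x) (auto intro: self_reach.intros)

lemma self_reach_x_y: "self_reach X (x, y) (x + y)"
  by (induction y) (auto simp: self_reach_x_0 intro: self_reach.ins)

lemma self_reach_diag_pred:
  "self_reach X q c \<Longrightarrow> q = (Suc x, Suc y) \<Longrightarrow> self_reach X (x, y) c"
proof (induction arbitrary: x y rule: self_reach.induct)
  case (del x0 y0 c)
  show ?case
  proof (cases x)
    case 0
    have "Suc y \<le> c" using self_reach_near_diagonal[OF del.hyps] del.prems 0 by simp
    then show ?thesis using self_reach_mono[OF self_reach_0_y[of X y], of "Suc c"] 0 by simp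
  next
    case (Suc x')
    then show ?thesis using del by (auto intro: self_reach.del)
  qed
next
  case (ins x0 y0 c)
  show ?case
  proof (cases y)
    case 0
    have "Suc x \<le> c" using self_reach_near_diagonal[OF ins.hyps] ins.prems 0 by simp
    then show ?thesis using self_reach_mono[OF self_reach_x_0[of X x], of "Suc c"] 0 by simp
  next
    case (Suc y')
    then show ?thesis using ins by (auto intro: self_reach.ins)
  qed
qed (auto intro: self_reach.weaken)

lemma self_reach_diag_back: "self_reach X (x + i, y + i) c \<Longrightarrow> self_reach X (x, y) c"
  by (induction i) (auto dest: self_reach_diag_pred)

lemma self_reach_pred:
  assumes "self_reach X q c" "q \<noteq> (0, 0)"
    and "\<not> (0 < fst q \<and> 0 < snd q \<and> fst q \<noteq> snd q \<and> fst q - 1 < length X \<and>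
           snd q - 1 < length X \<and> X ! (fst q - 1) = X ! (snd q - 1))"
  shows "0 < c \<and> (0 < fst q \<and> self_reach X (fst q - 1, snd q) (c - 1) \<or>
     0 < snd q \<and> self_reach X (fst q, snd q - 1) (c - 1) \<or>
     0 < fst q \<and> 0 < snd q \<and> fst q \<noteq> snd q \<and> self_reach X (fst q - 1, snd q - 1) (c - 1))"
  using assms
proof (induction rule: self_reach.induct)
  case (weaken p c)
  have "self_reach X q (c - 1) \<Longrightarrow> self_reach X q (Suc c - 1)" for q
    by (rule self_reach_mono) auto
  then show ?case using weaken by auto
qed auto

definition self_step :: "nat \<times> nat \<Rightarrow> nat \<times> nat \<Rightarrow> bool" where
  "self_step p q \<longleftrightarrow> (fst q = Suc (fst p) \<and> snd q = snd p) \<or> (fst q = fst p \<and> snd q = Suc (snd p)) \<or>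
     (fst q = Suc (fst p) \<and> snd q = Suc (snd p) \<and> fst p \<noteq> snd p)"

definition match_move :: "'a list \<Rightarrow> nat \<times> nat \<Rightarrow> nat \<times> nat \<Rightarrow> bool" where
  "match_move X p q \<longleftrightarrow> fst q = Suc (fst p) \<and> snd q = Suc (snd p) \<and> X ! fst p = X ! snd p"

fun self_path :: "(nat \<times> nat) list \<Rightarrow> bool" where
  "self_path (p # q # r) \<longleftrightarrow> self_step p q \<and> self_path (q # r)"
| "self_path _ \<longleftrightarrow> True"

fun path_cost :: "'a list \<Rightarrow> (nat \<times> nat) list \<Rightarrow> nat" where
  "path_cost X (p # q # r) = (if match_move X p q then 0 else 1) + path_cost X (q # r)"
| "path_cost X _ = 0"

fun path_breaks :: "'a list \<Rightarrow> (nat \<times> nat) list \<Rightarrow> (nat \<times> nat) list" where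
  "path_breaks X (p # q # r) = (if match_move X p q then [] else [p]) @ path_breaks X (q # r)"
| "path_breaks X _ = []"

lemma self_path_conv_nth: "self_path A \<longleftrightarrow> (\<forall>t < length A - 1. self_step (A ! t) (A ! Suc t))"
  by (induction A rule: self_path.induct) (auto simp: All_less_Suc2)

lemma self_step_iff_alignment_step:
  "self_step p q \<longleftrightarrow>
     ((fst q = Suc (fst p) \<and> snd q = snd p) \<or> (fst q = fst p \<and> snd q = Suc (snd p)) \<or>
      (fst q = Suc (fst p) \<and> snd q = Suc (snd p))) \<and>
     ((fst q = Suc (fst p) \<and> snd q = Suc (snd p)) \<longrightarrow> fst p \<noteq> snd p)"
  by (auto simp: self_step_def)

lemma self_alignment_iff_self_path:
  "self_alignment X A \<longleftrightarrow> A \<noteq> [] \<and> hd A = (0, 0) \<and> last A = (length X, length X) \<and> self_path A"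
  unfolding self_alignment_def is_alignment_def self_path_conv_nth diag_step_def
    self_step_iff_alignment_step
  by blast

lemma card_less_Suc_shift:
  "card {t. t < Suc N \<and> P t} = (if P 0 then 1 else 0) + card {t. t < N \<and> P (Suc t)}"
proof -
  have "{t. t < Suc N \<and> P t} = (if P 0 then {0} else {}) \<union> Suc ` {t. t < N \<and> P (Suc t)}"
    by (auto simp: less_Suc_eq_0_disj)
  then show ?thesis by (simp add: card_image)
qed

lemma path_cost_conv_card:
  "path_cost X A = card {t. t < length A - 1 \<and> \<not> match_move X (A ! t) (A ! Suc t)}"
  by (induction X A rule: path_cost.induct) (simp_all add: card_less_Suc_shift)

lemma align_cost_eq_path_cost: "align_cost X A = path_cost X A"
  unfolding align_cost_def path_cost_conv_card match_step_def diag_step_def match_move_def by simp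

lemma path_breaks_conv_nth:
  "path_breaks X A = map ((!) A) (filter (\<lambda>t. \<not> match_move X (A ! t) (A ! Suc t)) [0..<length A - 1])"
proof (induction X A rule: path_breaks.induct)
  case (1 X p q r)
  have "[0..<length (p # q # r) - 1] = 0 # map Suc [0..<length (q # r) - 1]"
    by (simp del: upt_Suc add: upt_conv_Cons map_Suc_upt)
  with 1 show ?case by (simp add: filter_map comp_def)
qed auto

lemma length_path_breaks: "length (path_breaks X A) = path_cost X A"
  by (induction X A rule: path_breaks.induct) auto

lemma breakpoints_eq_path_breaks:
  assumes "A \<noteq> []" "hd A = (0, 0)" "self_path A"
  shows "breakpoints X A = path_breaks X A @ [last A]"
proof -
  define L where "L = length A"
  have L: "L \<ge> 1" using assms by (cases A) (auto simp: L_def)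
  have u: "[0..<L] = [0..<L-1] @ [L-1]" using L by (cases L) auto
  have first_move: "\<not> match_move X (A ! 0) (A ! Suc 0)" if "1 < L"
  proof -
    have "self_step (A ! 0) (A ! Suc 0)" using assms(3) that by (simp add: self_path_conv_nth L_def)
    moreover have "A ! 0 = (0, 0)" using assms(1,2) by (simp add: hd_conv_nth)
    ultimately show ?thesis by (auto simp: self_step_def match_move_def)
  qed
  have "filter (\<lambda>t. t = 0 \<or> t = L - 1 \<or> \<not> match_step X A t) [0..<L-1] =
        filter (\<lambda>t. \<not> match_move X (A ! t) (A ! Suc t)) [0..<L-1]"
    using first_move by (intro filter_cong) (auto simp: match_step_def diag_step_def match_move_def)
  moreover have "last A = A ! (L - 1)" using assms(1) by (simp add: last_conv_nth L_def)
  ultimately show ?thesis unfolding breakpoints_def path_breaks_conv_nth L_def[symmetric] u by simp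
qed

lemma self_path_snoc: "A \<noteq> [] \<Longrightarrow> self_path (A @ [q]) \<longleftrightarrow> self_path A \<and> self_step (last A) q"
  by (induction A rule: self_path.induct) auto

lemma path_cost_snoc:
  "A \<noteq> [] \<Longrightarrow> path_cost X (A @ [q]) = path_cost X A + (if match_move X (last A) q then 0 else 1)"
  by (induction X A rule: path_cost.induct) auto

lemma self_path_in_box:
  "self_path A \<Longrightarrow> A \<noteq> [] \<Longrightarrow> last A = (n, n) \<Longrightarrow> \<forall>q\<in>set A. fst q \<le> n \<and> snd q \<le> n"
proof (induction A rule: self_path.induct)
  case (1 p q r)
  then have "fst p \<le> fst q" "snd p \<le> snd q" by (auto simp: self_step_def)
  with 1 show ?case by auto
qed auto

lemma self_reach_along_path:
  "self_path (p # r) \<Longrightarrow> self_reach X p c \<Longrightarrow>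
   \<forall>q\<in>set (p # r). fst q \<le> length X \<and> snd q \<le> length X \<Longrightarrow>
   self_reach X (last (p # r)) (c + path_cost X (p # r))"
proof (induction r arbitrary: p c)
  case (Cons q r)
  obtain x y where p: "p = (x, y)" by (cases p)
  obtain x' y' where q: "q = (x', y')" by (cases q)
  have "self_step p q" and r: "self_path (q # r)" using Cons.prems by auto
  then consider "x' = Suc x" "y' = y" | "x' = x" "y' = Suc y" | "x' = Suc x" "y' = Suc y" "x \<noteq> y"
    using p q by (auto simp: self_step_def)
  then have "self_reach X q (c + (if match_move X p q then 0 else 1))"
    using Cons.prems(2,3) p q
    by cases (auto simp: match_move_def intro: self_reach.intros)
  from Cons.IH[OF r this] Cons.prems(3)
  have "self_reach X (last (q # r)) (c + (if match_move X p q then 0 else 1) + path_cost X (q # r))"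
    by simp
  then show ?case by (simp add: add.assoc)
qed simp

lemma self_reach_imp_path:
  "self_reach X p c \<Longrightarrow>
   \<exists>A. A \<noteq> [] \<and> hd A = (0, 0) \<and> last A = p \<and> self_path A \<and> path_cost X A \<le> c"
proof (induction rule: self_reach.induct)
  case origin
  show ?case by (intro exI[of _ "[(0, 0)]"]) simp
next
  case (weaken p c)
  then show ?case using le_SucI by blast
next
  case (del x y c)
  then obtain A where "A \<noteq> []" "hd A = (0, 0)" "last A = (x, y)" "self_path A" "path_cost X A \<le> c"
    by blast
  then show ?case by (intro exI[of _ "A @ [(Suc x, y)]"])
      (auto simp: self_path_snoc path_cost_snoc self_step_def match_move_def)
next
  case (ins x y c)
  then obtain A where "A \<noteq> []" "hd A = (0, 0)" "last A = (x, y)" "self_path A" "path_cost X A \<le> c"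
    by blast
  then show ?case by (intro exI[of _ "A @ [(x, Suc y)]"])
      (auto simp: self_path_snoc path_cost_snoc self_step_def match_move_def)
next
  case (sub x y c)
  then obtain A where "A \<noteq> []" "hd A = (0, 0)" "last A = (x, y)" "self_path A" "path_cost X A \<le> c"
    by blast
  with sub.hyps show ?case by (intro exI[of _ "A @ [(Suc x, Suc y)]"])
      (auto simp: self_path_snoc path_cost_snoc self_step_def match_move_def)
next
  case (match x y c)
  then obtain A where "A \<noteq> []" "hd A = (0, 0)" "last A = (x, y)" "self_path A" "path_cost X A \<le> c"
    by blast
  with match.hyps show ?case by (intro exI[of _ "A @ [(Suc x, Suc y)]"])
      (auto simp: self_path_snoc path_cost_snoc self_step_def match_move_def)
qed

lemma self_alignment_exists: "\<exists>A. self_alignment X A"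
  using self_reach_imp_path[OF self_reach_x_y[of X "length X" "length X"]]
  by (auto simp: self_alignment_iff_self_path)

lemma selfed_attained: "\<exists>A. self_alignment X A \<and> align_cost X A = selfed X"
  using LeastI_ex[of "\<lambda>c. \<exists>A. self_alignment X A \<and> align_cost X A = c"] self_alignment_exists
  unfolding selfed_def by blast

lemma selfed_le_align_cost: "self_alignment X A \<Longrightarrow> selfed X \<le> align_cost X A"
  unfolding selfed_def by (rule Least_le) blast

lemma selfed_le_iff_self_reach: "selfed X \<le> c \<longleftrightarrow> self_reach X (length X, length X) c"
proof
  obtain A where A: "self_alignment X A" "align_cost X A = selfed X"
    using selfed_attained by blast
  then have A': "A \<noteq> []" "hd A = (0, 0)" "last A = (length X, length X)" "self_path A"
    by (auto simp: self_alignment_iff_self_path)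
  obtain r where r: "A = (0, 0) # r" using A'(1,2) by (cases A) auto
  have "self_reach X (last A) (0 + path_cost X A)"
    using self_reach_along_path[of "(0, 0)" r X 0] A' r self_path_in_box[OF A'(4,1,3)]
    by (simp add: self_reach.origin)
  moreover assume "selfed X \<le> c"
  ultimately show "self_reach X (length X, length X) c"
    using A'(3) A(2) by (auto simp: align_cost_eq_path_cost intro: self_reach_mono)
next
  assume "self_reach X (length X, length X) c"
  then obtain A where "A \<noteq> []" "hd A = (0, 0)" "last A = (length X, length X)" "self_path A"
    "path_cost X A \<le> c"
    using self_reach_imp_path by blast
  then show "selfed X \<le> c"
    using selfed_le_align_cost[of X A]
    by (auto simp: self_alignment_iff_self_path align_cost_eq_path_cost)
qed

section \<open>The Landau--Vishkin table\<close>

text \<open>Diagonal index j stands for the diagonal y = x + j - K1, where K1 = k + 1 indexes the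
  main diagonal. An entry v > 0 encodes the point (v - 1, v - 1 + j - K1); v = 0 means that the
  diagonal has not been reached.\<close>

definition slide_diag :: "'a list \<Rightarrow> nat \<Rightarrow> nat \<Rightarrow> nat \<Rightarrow> nat" where
  "slide_diag X K1 j v =
     (if 0 < v \<and> j \<noteq> K1 then v + lcp_len (drop (v - 1) X) (drop (v - 1 + j - K1) X) else v)"

definition front_candidate :: "nat \<Rightarrow> nat \<Rightarrow> nat \<Rightarrow> nat \<Rightarrow> nat \<Rightarrow> nat" where
  "front_candidate K1 j s s1 s0 =
     max (max (if j \<noteq> K1 \<and> 0 < s then Suc s else s) (if 0 < s1 then Suc s1 else 0)) s0"

fun front :: "'a list \<Rightarrow> nat \<Rightarrow> nat \<Rightarrow> nat \<Rightarrow> nat" where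
  "front X k 0 j = (if j = Suc k then 1 else 0)"
| "front X k (Suc e) j = (if 1 \<le> j \<and> j \<le> 2 * k + 1 then
     slide_diag X (Suc k) j
       (front_candidate (Suc k) j (front X k e j) (front X k e (Suc j)) (front X k e (j - 1)))
     else 0)"

lemma slide_diag_ge: "v \<le> slide_diag X K1 j v"
  by (simp add: slide_diag_def)

lemma slide_diag_0: "slide_diag X K1 j 0 = 0"
  by (simp add: slide_diag_def)

lemma slide_diag_le: "slide_diag X K1 j v \<le> max v (Suc (length X))"
proof -
  have "lcp_len (drop (v - 1) X) (drop (v - 1 + j - K1) X) \<le> length X - (v - 1)"
    using lcp_len_le[of "drop (v - 1) X" "drop (v - 1 + j - K1) X"] by simp
  then show ?thesis by (auto simp: slide_diag_def)
qed

lemma front_le: "front X k e j \<le> length X + e + 1"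
proof (induction e arbitrary: j)
  case (Suc e)
  define v where
    "v = front_candidate (Suc k) j (front X k e j) (front X k e (Suc j)) (front X k e (j - 1))"
  have "v \<le> length X + Suc e + 1"
    using Suc.IH[of j] Suc.IH[of "Suc j"] Suc.IH[of "j - 1"] by (auto simp: front_candidate_def v_def)
  moreover have "slide_diag X (Suc k) j v \<le> max v (Suc (length X))" by (rule slide_diag_le)
  ultimately have "slide_diag X (Suc k) j v \<le> length X + Suc e + 1" by simp
  then show ?case by (simp add: v_def)
qed simp

lemma front_sentinels: "front X k e 0 = 0" "front X k e (2 * k + 2) = 0"
  by (cases e; simp)+

lemma front_Suc: "1 \<le> j \<Longrightarrow> j \<le> 2 * k + 1 \<Longrightarrow> front X k (Suc e) j =
   slide_diag X (Suc k) j
     (front_candidate (Suc k) j (front X k e j) (front X k e (Suc j)) (front X k e (j - 1)))"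
  by simp

declare front.simps(2)[simp del]

lemma front_ge_candidate: "1 \<le> j \<Longrightarrow> j \<le> 2 * k + 1 \<Longrightarrow>
   front_candidate (Suc k) j (front X k e j) (front X k e (Suc j)) (front X k e (j - 1))
   \<le> front X k (Suc e) j"
  by (simp add: front_Suc slide_diag_ge)

lemma front_Suc_ge:
  assumes "1 \<le> j" "j \<le> 2 * k + 1"
  shows "front X k e j \<le> front X k (Suc e) j"
    and "j \<noteq> Suc k \<Longrightarrow> 0 < front X k e j \<Longrightarrow> Suc (front X k e j) \<le> front X k (Suc e) j"
    and "0 < front X k e (Suc j) \<Longrightarrow> Suc (front X k e (Suc j)) \<le> front X k (Suc e) j"
    and "front X k e (j - 1) \<le> front X k (Suc e) j"
  using front_ge_candidate[OF assms, of X e] by (auto simp: front_candidate_def split: if_splits)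

definition diag_reached :: "'a list \<Rightarrow> nat \<Rightarrow> nat \<Rightarrow> nat \<Rightarrow> nat \<Rightarrow> bool" where
  "diag_reached X K1 e j v \<longleftrightarrow> K1 \<le> v - 1 + j \<and> self_reach X (v - 1, v - 1 + j - K1) e"

lemma diag_reached_slide:
  assumes "0 < v" "j \<noteq> K1" "diag_reached X K1 e j v"
  shows "diag_reached X K1 e j (slide_diag X K1 j v)"
proof -
  define l where "l = lcp_len (drop (v - 1) X) (drop (v - 1 + j - K1) X)"
  have K1: "K1 \<le> v - 1 + j" using assms(3) by (simp add: diag_reached_def)
  have "self_reach X (v - 1 + i, v - 1 + j - K1 + i) e" if "i \<le> l" for i
    using that
  proof (induction i)
    case (Suc i)
    then have "self_reach X (v - 1 + i, v - 1 + j - K1 + i) e" "i < l" by simp_all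
    moreover have "v - 1 + i \<noteq> v - 1 + j - K1 + i" using assms(2) K1 by auto
    ultimately show ?case
      using lcp_len_drop(1)[OF l_def] self_reach.match[of X "v - 1 + i" "v - 1 + j - K1 + i" e]
      by simp
  qed (use assms(3) in \<open>simp add: diag_reached_def\<close>)
  then have "self_reach X (v - 1 + l, v - 1 + j - K1 + l) e" by simp
  moreover have "slide_diag X K1 j v = v + l" using assms by (simp add: slide_diag_def l_def)
  ultimately show ?thesis using assms(1) K1 by (simp add: diag_reached_def algebra_simps)
qed

lemma diag_reached_sub:
  assumes "diag_reached X K1 e j s" "0 < s"
  shows "diag_reached X K1 (Suc e) j (if j \<noteq> K1 then Suc s else s)"
proof (cases "j = K1")
  case False
  from assms have K1: "K1 \<le> s - 1 + j" and r: "self_reach X (s - 1, s - 1 + j - K1) e"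
    by (auto simp: diag_reached_def)
  with False have "s - 1 \<noteq> s - 1 + j - K1" by auto
  moreover have "Suc (s - 1) = s" "Suc (s - 1 + j - K1) = s + j - K1" using assms(2) K1 by auto
  ultimately have "self_reach X (s, s + j - K1) (Suc e)"
    using self_reach.sub[OF r] by metis
  with False K1 show ?thesis by (simp add: diag_reached_def)
qed (use assms self_reach.weaken in \<open>auto simp: diag_reached_def\<close>)

lemma diag_reached_del:
  "diag_reached X K1 e (Suc j) s \<Longrightarrow> 0 < s \<Longrightarrow> diag_reached X K1 (Suc e) j (Suc s)"
  using self_reach.del[of X "s - 1" "s - 1 + Suc j - K1" e] by (auto simp: diag_reached_def)

lemma diag_reached_ins:
  assumes "diag_reached X K1 e (j - 1) s" "1 \<le> j"
  shows "diag_reached X K1 (Suc e) j s"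
proof -
  from assms have K1: "K1 \<le> s - 1 + (j - 1)" and r: "self_reach X (s - 1, s - 1 + (j - 1) - K1) e"
    by (auto simp: diag_reached_def)
  have "Suc (s - 1 + (j - 1) - K1) = s - 1 + j - K1" using K1 assms(2) by auto
  with self_reach.ins[OF r] have "self_reach X (s - 1, s - 1 + j - K1) (Suc e)" by metis
  with K1 show ?thesis by (simp add: diag_reached_def)
qed

lemma front_candidate_sound:
  assumes "\<And>j'. 0 < f j' \<Longrightarrow> diag_reached X K1 e j' (f j')" "1 \<le> j"
    and "0 < front_candidate K1 j (f j) (f (Suc j)) (f (j - 1))"
  shows "diag_reached X K1 (Suc e) j (front_candidate K1 j (f j) (f (Suc j)) (f (j - 1)))"
  using assms diag_reached_sub[of X K1 e j "f j"] diag_reached_del[of X K1 e j "f (Suc j)"]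
    diag_reached_ins[of X K1 e j "f (j - 1)"]
  by (auto simp: front_candidate_def max_def)

lemma front_sound: "0 < front X k e j \<Longrightarrow> diag_reached X (Suc k) e j (front X k e j)"
proof (induction e arbitrary: j)
  case 0
  then show ?case by (auto simp: diag_reached_def split: if_splits intro: self_reach.origin)
next
  case (Suc e)
  define v where
    "v = front_candidate (Suc k) j (front X k e j) (front X k e (Suc j)) (front X k e (j - 1))"
  have j: "1 \<le> j" "j \<le> 2 * k + 1" and T: "front X k (Suc e) j = slide_diag X (Suc k) j v"
    using Suc.prems by (auto simp: v_def front.simps(2) split: if_splits)
  have "0 < v" using Suc.prems T slide_diag_0 by (metis gr0I)
  with front_candidate_sound[OF Suc.IH j(1)] have "diag_reached X (Suc k) (Suc e) j v"
    by (simp add: v_def)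
  with \<open>0 < v\<close> show ?case
    using diag_reached_slide[of v j "Suc k" X "Suc e"] T by (cases "j = Suc k") (auto simp: slide_diag_def)
qed

lemma front_stops_at_mismatch:
  assumes lt: "x < front X k c j" and jn: "j \<noteq> Suc k" and j: "Suc k \<le> x + j"
    and match: "x < length X" "x + j - Suc k < length X" "X ! x = X ! (x + j - Suc k)"
  shows "Suc x < front X k c j"
proof -
  obtain c' where c: "c = Suc c'" using lt jn by (cases c) auto
  have j: "1 \<le> j" "j \<le> 2 * k + 1" using lt c by (auto simp: front.simps(2) split: if_splits)
  define v where
    "v = front_candidate (Suc k) j (front X k c' j) (front X k c' (Suc j)) (front X k c' (j - 1))"
  have T: "front X k c j = slide_diag X (Suc k) j v" using front_Suc[OF j] c by (simp add: v_def)
  have v0: "0 < v" using lt T slide_diag_0 by (metis gr0I not_less0)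
  have "diag_reached X (Suc k) (Suc c') j v"
    using front_candidate_sound[OF front_sound j(1)] v0 by (simp add: v_def)
  then have vs: "Suc k \<le> v - 1 + j" by (simp add: diag_reached_def)
  define l where "l = lcp_len (drop (v - 1) X) (drop (v - 1 + j - Suc k) X)"
  have T2: "front X k c j = v + l" using T v0 jn by (simp add: slide_diag_def l_def)
  show ?thesis
  proof (rule ccontr)
    assume "\<not> ?thesis"
    then have xe: "x = v - 1 + l" using lt T2 v0 by simp
    then have "x + j - Suc k = v - 1 + j - Suc k + l" using vs by simp
    with xe match lcp_len_drop(2)[OF l_def] show False by simp
  qed
qed

lemma front_complete:
  "self_reach X p c \<Longrightarrow> c \<le> k \<Longrightarrow> fst p < front X k c (snd p + Suc k - fst p)"
proof (induction rule: self_reach.induct)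
  case origin
  then show ?case by simp
next
  case (weaken p c)
  obtain x y where p: "p = (x, y)" by (cases p)
  have "x \<le> y + c" "y \<le> x + c" using self_reach_near_diagonal[OF weaken.hyps] p by auto
  then have j: "1 \<le> y + Suc k - x" "y + Suc k - x \<le> 2 * k + 1" using weaken.prems by auto
  have "x < front X k c (y + Suc k - x)" using weaken p by simp
  also have "\<dots> \<le> front X k (Suc c) (y + Suc k - x)"
    using front_Suc_ge(1)[OF j] .
  finally show ?case using p by simp
next
  case (del x y c)
  have "x \<le> y + c" "y \<le> x + c" using self_reach_near_diagonal[OF del.hyps] by auto
  then have j: "1 \<le> y + Suc k - Suc x" "y + Suc k - Suc x \<le> 2 * k + 1"
    and jj: "Suc (y + Suc k - Suc x) = y + Suc k - x"
    using del.prems by auto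
  have "x < front X k c (y + Suc k - x)" using del by simp
  then show ?case using front_Suc_ge(3)[OF j, of X c] jj by fastforce
next
  case (ins x y c)
  have "x \<le> y + c" "y \<le> x + c" using self_reach_near_diagonal[OF ins.hyps] by auto
  then have j: "1 \<le> Suc y + Suc k - x" "Suc y + Suc k - x \<le> 2 * k + 1"
    and jj: "Suc y + Suc k - x - 1 = y + Suc k - x"
    using ins.prems by auto
  have "x < front X k c (y + Suc k - x)" using ins by simp
  then show ?case using front_Suc_ge(4)[OF j, of X c] jj by simp
next
  case (sub x y c)
  have "x \<le> y + c" "y \<le> x + c" using self_reach_near_diagonal[OF sub.hyps(1)] by auto
  then have j: "1 \<le> y + Suc k - x" "y + Suc k - x \<le> 2 * k + 1" "y + Suc k - x \<noteq> Suc k"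
    using sub.prems sub.hyps(2) by auto
  have "x < front X k c (y + Suc k - x)" using sub by simp
  then show ?case using front_Suc_ge(2)[OF j(1,2) j(3), of X c] by fastforce
next
  case (match x y c)
  have "x \<le> y + c" "y \<le> x + c" using self_reach_near_diagonal[OF match.hyps(1)] by auto
  with match.prems match.hyps(2) have j: "y + Suc k - x \<noteq> Suc k" "Suc k \<le> x + (y + Suc k - x)"
    "x + (y + Suc k - x) - Suc k = y"
    by auto
  have "x < front X k c (y + Suc k - x)" using match by simp
  with front_stops_at_mismatch[OF _ j(1,2)] j(3) match.hyps(3-5) show ?case by simp
qed

theorem front_iff:
  assumes "c \<le> k" "Suc k \<le> x + j" "j \<le> 2 * k + 2"
  shows "self_reach X (x, x + j - Suc k) c \<longleftrightarrow> x < front X k c j"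
proof
  assume "self_reach X (x, x + j - Suc k) c"
  from front_complete[OF this assms(1)] assms show "x < front X k c j" by simp
next
  assume a: "x < front X k c j"
  from front_sound[of X k c j] a have h: "Suc k \<le> front X k c j - 1 + j"
    "self_reach X (front X k c j - 1, front X k c j - 1 + j - Suc k) c"
    by (auto simp: diag_reached_def)
  define i where "i = front X k c j - 1 - x"
  have "front X k c j - 1 = x + i" "front X k c j - 1 + j - Suc k = x + j - Suc k + i"
    using a assms h(1) by (auto simp: i_def)
  with h(2) show "self_reach X (x, x + j - Suc k) c"
    using self_reach_diag_back[of X x i "x + j - Suc k" c] by simp
qed

corollary selfed_le_iff_front:
  "e \<le> k \<Longrightarrow> selfed X \<le> e \<longleftrightarrow> length X < front X k e (Suc k)"
  using front_iff[of e k "length X" "Suc k" X] by (simp add: selfed_le_iff_self_reach)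

section \<open>Traceback\<close>

text \<open>S is the part of an alignment already reconstructed backwards from (n, n) to (x, y);
  its cost plus the remaining budget c, which still suffices to reach (x, y), is E.\<close>

definition trace_inv :: "'a list \<Rightarrow> nat \<Rightarrow> nat \<Rightarrow> nat \<Rightarrow> nat \<Rightarrow> (nat \<times> nat) list \<Rightarrow> bool" where
  "trace_inv X E x y c S \<longleftrightarrow> x \<le> length X \<and> y \<le> length X \<and> self_reach X (x, y) c \<and>
     S \<noteq> [] \<and> self_path S \<and> hd S = (x, y) \<and> last S = (length X, length X) \<and>
     path_cost X S + c = E"

lemma trace_inv_slide:
  assumes T: "trace_inv X E x y c S" and l: "l = lcs_len X x y" and ne: "x \<noteq> y"
  shows "\<exists>S'. trace_inv X E (x - l) (y - l) c S' \<and> path_breaks X S' = path_breaks X S"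
proof -
  have xy: "x \<le> length X" "y \<le> length X" using T by (auto simp: trace_inv_def)
  note lcs = lcs_len_spec[OF xy l]
  have "\<exists>S'. trace_inv X E (x - i) (y - i) c S' \<and> path_breaks X S' = path_breaks X S"
    if "i \<le> l" for i
    using that
  proof (induction i)
    case (Suc i)
    then obtain S' where S': "trace_inv X E (x - i) (y - i) c S'" "path_breaks X S' = path_breaks X S"
      by auto
    have "i < l" using Suc by simp
    then have i: "i < x" "i < y" using lcs(1,2) by auto
    obtain r where r: "S' = (x - i, y - i) # r" using S'(1) by (cases S') (auto simp: trace_inv_def)
    define p where "p = (x - Suc i, y - Suc i)"
    have "match_move X p (x - i, y - i)"
      using lcs(3)[OF \<open>i < l\<close>] i by (simp add: match_move_def p_def Suc_diff_Suc)
    moreover have "self_step p (x - i, y - i)"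
      using i ne by (auto simp: self_step_def p_def)
    moreover have "self_reach X p c"
      using T i self_reach_diag_back[of X "x - Suc i" "Suc i" "y - Suc i" c]
      by (simp add: trace_inv_def p_def)
    ultimately have "trace_inv X E (x - Suc i) (y - Suc i) c (p # S') \<and>
        path_breaks X (p # S') = path_breaks X S"
      using S' r xy by (auto simp: trace_inv_def p_def)
    then show ?case by blast
  qed (use T in auto)
  then show ?thesis by blast
qed

lemma trace_inv_edit:
  assumes T: "trace_inv X E x y c S" and c: "0 < c" and p_reach: "self_reach X p (c - 1)"
    and p: "(0 < x \<and> p = (x - 1, y)) \<or> (0 < y \<and> p = (x, y - 1)) \<or>
            (0 < x \<and> 0 < y \<and> x \<noteq> y \<and> X ! (x - 1) \<noteq> X ! (y - 1) \<and> p = (x - 1, y - 1))"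
  shows "trace_inv X E (fst p) (snd p) (c - 1) (p # S) \<and> path_breaks X (p # S) = p # path_breaks X S"
proof -
  obtain r where r: "S = (x, y) # r" using T by (cases S) (auto simp: trace_inv_def)
  have "self_step p (x, y)" and "\<not> match_move X p (x, y)"
    using p by (cases p; auto simp: self_step_def match_move_def)+
  then show ?thesis using T r c p_reach p by (auto simp: trace_inv_def)
qed

lemma trace_inv_origin:
  "trace_inv X E 0 0 c S \<Longrightarrow> self_alignment X S \<and> align_cost X S \<le> E \<and>
     breakpoints X S = path_breaks X S @ [(length X, length X)]"
  using breakpoints_eq_path_breaks[of S X]
  by (auto simp: trace_inv_def self_alignment_iff_self_path align_cost_eq_path_cost)

definition pred_choice :: "'a list \<Rightarrow> nat \<Rightarrow> nat \<Rightarrow> nat \<Rightarrow> (nat \<times> nat) option" where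
  "pred_choice X c x y =
    (if 0 < x \<and> self_reach X (x - 1, y) (c - 1) then Some (x - 1, y)
     else if 0 < y \<and> self_reach X (x, y - 1) (c - 1) then Some (x, y - 1)
     else if 0 < x \<and> 0 < y \<and> x \<noteq> y \<and> self_reach X (x - 1, y - 1) (c - 1) then Some (x - 1, y - 1)
     else None)"

lemma trace_back_step:
  assumes T: "trace_inv X E x y c S" and nz: "(x, y) \<noteq> (0, 0)"
    and l: "l = (if x \<noteq> y then lcs_len X x y else 0)"
  obtains p S' where "0 < c" "pred_choice X c (x - l) (y - l) = Some p"
    "trace_inv X E (fst p) (snd p) (c - 1) (p # S')" "path_breaks X (p # S') = p # path_breaks X S"
proof -
  have xy: "x \<le> length X" "y \<le> length X" using T by (auto simp: trace_inv_def)
  define x1 where "x1 = x - l"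
  define y1 where "y1 = y - l"
  have lcs: "l \<le> x" "l \<le> y" "l < x \<Longrightarrow> l < y \<Longrightarrow> X ! (x - 1 - l) \<noteq> X ! (y - 1 - l)"
    if "x \<noteq> y"
    using lcs_len_spec[OF xy, of l] that l by auto
  obtain S1 where S1: "trace_inv X E x1 y1 c S1" "path_breaks X S1 = path_breaks X S"
  proof (cases "x = y")
    case False
    with trace_inv_slide[OF T _ False, of l] l that show ?thesis by (auto simp: x1_def y1_def)
  qed (use that T l in \<open>simp add: x1_def y1_def\<close>)
  have reach1: "self_reach X (x1, y1) c" using S1(1) by (simp add: trace_inv_def)
  have nz1: "(x1, y1) \<noteq> (0, 0)"
    using nz lcs by (cases "x = y") (auto simp: x1_def y1_def l)
  have mismatch: "X ! (x1 - 1) \<noteq> X ! (y1 - 1)" if "0 < x1" "0 < y1" "x1 \<noteq> y1"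
    using that lcs by (cases "x = y") (auto simp: x1_def y1_def l)
  from self_reach_pred[OF reach1 nz1] mismatch
  have pred: "0 < c \<and> (0 < x1 \<and> self_reach X (x1 - 1, y1) (c - 1) \<or>
      0 < y1 \<and> self_reach X (x1, y1 - 1) (c - 1) \<or>
      0 < x1 \<and> 0 < y1 \<and> x1 \<noteq> y1 \<and> self_reach X (x1 - 1, y1 - 1) (c - 1))"
    by auto
  then have "pred_choice X c x1 y1 \<noteq> None" unfolding pred_choice_def by (metis option.distinct(1))
  then obtain p where p: "pred_choice X c x1 y1 = Some p" by blast
  have "self_reach X p (c - 1)"
    "(0 < x1 \<and> p = (x1 - 1, y1)) \<or> (0 < y1 \<and> p = (x1, y1 - 1)) \<or>
     (0 < x1 \<and> 0 < y1 \<and> x1 \<noteq> y1 \<and> X ! (x1 - 1) \<noteq> X ! (y1 - 1) \<and> p = (x1 - 1, y1 - 1))"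
    using p mismatch by (auto simp: pred_choice_def split: if_splits)
  with trace_inv_edit[OF S1(1)] pred S1(2) p show ?thesis
    by (intro that[of p S1]) (auto simp: x1_def y1_def)
qed

lemma encode_points_Nil [simp]: "encode_points [] = []"
  by (simp add: encode_points_def)

lemma length_encode_points: "length (encode_points ps) = 2 * length ps"
  by (induction ps) (auto simp: encode_points_def)

lemma encode_points_snoc: "encode_points (ps @ [(a, b)]) = encode_points ps @ [a, b]"
  by (simp add: encode_points_def)

lemma encode_points_nth:
  "i < length ps \<Longrightarrow>
   encode_points ps ! (2 * i) = fst (ps ! i) \<and> encode_points ps ! (2 * i + 1) = snd (ps ! i)"
proof (induction ps arbitrary: i)
  case (Cons p ps)
  then show ?case by (cases i; cases p) (auto simp: encode_points_def)
qed simp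

text \<open>Registers: 0 = k (input), 1 = n, 2 = 1, 3 = k + 1, 4 = W = 2k + 3, 14 = 2k + 2, 20 = 0;
  5 = current cost e, 6 = diagonal j, 7 and 8 = base addresses of rows e and e - 1;
  15, 16 = traceback point (x, y), 17 = remaining budget, 18 = stack pointer,
  19 = stack base (k + 1) W.  Memory: front X k e j is stored at e W + j, the breakpoints
  found by the traceback are pushed from address (k + 1) W on.
  Code: 117--123 initialisation and row 0; 6--15 test of row e and start of row e + 1;
  16--46 one diagonal of the new row; 47--51 start of the traceback; 52--60 slide back along
  a diagonal with an LCS query; 61--95 choice of the predecessor; 96--103 push;
  104--116 output of 1, the stack in reverse and (n, n).\<close>

definition prog :: "instr list" where
"prog = [
 Jmp 117, Halt, Halt, Halt, Halt, Halt,
 Add 11 7 3, Load 12 11, JmpLess 1 12 47, JmpLess 5 0 12, Out 20, Halt,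
 Add 8 7 20, Add 7 7 4, Add 5 5 2, Add 6 2 20,
 Add 11 8 6, Load 10 11, JmpLess 6 3 21, JmpLess 3 6 21, Jmp 23,
 JmpLess 10 2 23, Add 10 10 2,
 Add 12 11 2, Load 12 12, JmpLess 12 2 29, Add 12 12 2, JmpLess 12 10 29, Add 10 12 20,
 Sub 12 11 2, Load 12 12, JmpLess 12 10 33, Add 10 12 20,
 JmpLess 10 2 42, JmpLess 6 3 37, JmpLess 3 6 37, Jmp 42,
 Sub 12 10 2, Add 13 12 6, Sub 13 13 3, PLCP 13 12 1 13 1, Add 10 10 13,
 Add 11 7 6, Store 11 10, Add 6 6 2, JmpLess 6 14 16, Jmp 6,
 Add 15 1 20, Add 16 1 20, Add 17 5 20, Mul 19 3 4, Add 18 19 20,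
 JmpLess 20 15 55, JmpLess 20 16 55, Jmp 104,
 JmpLess 15 16 58, JmpLess 16 15 58, Jmp 61,
 PLCPR 21 20 15 20 16, Sub 15 15 21, Sub 16 16 21,
 Sub 22 17 2, Mul 22 22 4,
 JmpLess 20 15 65, Jmp 72,
 Sub 23 15 2, Add 24 16 20, Add 25 24 3, Sub 25 25 23, Add 25 25 22, Load 25 25, JmpLess 23 25 96,
 JmpLess 20 16 74, Jmp 81,
 Add 23 15 20, Sub 24 16 2, Add 25 24 3, Sub 25 25 23, Add 25 25 22, Load 25 25, JmpLess 23 25 96,
 JmpLess 20 15 83, Jmp 104, JmpLess 20 16 85, Jmp 104, JmpLess 15 16 88, JmpLess 16 15 88, Jmp 104,
 Sub 23 15 2, Sub 24 16 2, Add 25 24 3, Sub 25 25 23, Add 25 25 22, Load 25 25, JmpLess 23 25 96, Jmp 104,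
 Store 18 23, Add 18 18 2, Store 18 24, Add 18 18 2, Add 15 23 20, Add 16 24 20, Sub 17 17 2, Jmp 52,
 Out 2,
 JmpLess 19 18 109, Out 1, Out 1, Halt,
 Sub 18 18 2, Sub 18 18 2, Load 25 18, Out 25, Add 26 18 2, Load 25 26, Out 25, Jmp 105,
 PLength 1, LoadConst 2 1, Add 3 0 2, Add 14 3 3, Add 4 14 2, Store 3 2, Jmp 6]"

lemma prog_len[simp]: "length prog = 124" by (simp add: prog_def)

lemma prog_nth[simp]:
  "prog ! 0 = Jmp 117"
  "prog ! 1 = Halt"
  "prog ! 2 = Halt"
  "prog ! 3 = Halt"
  "prog ! 4 = Halt"
  "prog ! 5 = Halt"
  "prog ! 6 = Add 11 7 3"
  "prog ! 7 = Load 12 11"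
  "prog ! 8 = JmpLess 1 12 47"
  "prog ! 9 = JmpLess 5 0 12"
  "prog ! 10 = Out 20"
  "prog ! 11 = Halt"
  "prog ! 12 = Add 8 7 20"
  "prog ! 13 = Add 7 7 4"
  "prog ! 14 = Add 5 5 2"
  "prog ! 15 = Add 6 2 20"
  "prog ! 16 = Add 11 8 6"
  "prog ! 17 = Load 10 11"
  "prog ! 18 = JmpLess 6 3 21"
  "prog ! 19 = JmpLess 3 6 21"
  "prog ! 20 = Jmp 23"
  "prog ! 21 = JmpLess 10 2 23"
  "prog ! 22 = Add 10 10 2"
  "prog ! 23 = Add 12 11 2"
  "prog ! 24 = Load 12 12"
  "prog ! 25 = JmpLess 12 2 29"
  "prog ! 26 = Add 12 12 2"
  "prog ! 27 = JmpLess 12 10 29"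
  "prog ! 28 = Add 10 12 20"
  "prog ! 29 = Sub 12 11 2"
  "prog ! 30 = Load 12 12"
  "prog ! 31 = JmpLess 12 10 33"
  "prog ! 32 = Add 10 12 20"
  "prog ! 33 = JmpLess 10 2 42"
  "prog ! 34 = JmpLess 6 3 37"
  "prog ! 35 = JmpLess 3 6 37"
  "prog ! 36 = Jmp 42"
  "prog ! 37 = Sub 12 10 2"
  "prog ! 38 = Add 13 12 6"
  "prog ! 39 = Sub 13 13 3"
  "prog ! 40 = PLCP 13 12 1 13 1"
  "prog ! 41 = Add 10 10 13"
  "prog ! 42 = Add 11 7 6"
  "prog ! 43 = Store 11 10"
  "prog ! 44 = Add 6 6 2"
  "prog ! 45 = JmpLess 6 14 16"
  "prog ! 46 = Jmp 6"
  "prog ! 47 = Add 15 1 20"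
  "prog ! 48 = Add 16 1 20"
  "prog ! 49 = Add 17 5 20"
  "prog ! 50 = Mul 19 3 4"
  "prog ! 51 = Add 18 19 20"
  "prog ! 52 = JmpLess 20 15 55"
  "prog ! 53 = JmpLess 20 16 55"
  "prog ! 54 = Jmp 104"
  "prog ! 55 = JmpLess 15 16 58"
  "prog ! 56 = JmpLess 16 15 58"
  "prog ! 57 = Jmp 61"
  "prog ! 58 = PLCPR 21 20 15 20 16"
  "prog ! 59 = Sub 15 15 21"
  "prog ! 60 = Sub 16 16 21"
  "prog ! 61 = Sub 22 17 2"
  "prog ! 62 = Mul 22 22 4"
  "prog ! 63 = JmpLess 20 15 65"
  "prog ! 64 = Jmp 72"
  "prog ! 65 = Sub 23 15 2"
  "prog ! 66 = Add 24 16 20"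
  "prog ! 67 = Add 25 24 3"
  "prog ! 68 = Sub 25 25 23"
  "prog ! 69 = Add 25 25 22"
  "prog ! 70 = Load 25 25"
  "prog ! 71 = JmpLess 23 25 96"
  "prog ! 72 = JmpLess 20 16 74"
  "prog ! 73 = Jmp 81"
  "prog ! 74 = Add 23 15 20"
  "prog ! 75 = Sub 24 16 2"
  "prog ! 76 = Add 25 24 3"
  "prog ! 77 = Sub 25 25 23"
  "prog ! 78 = Add 25 25 22"
  "prog ! 79 = Load 25 25"
  "prog ! 80 = JmpLess 23 25 96"
  "prog ! 81 = JmpLess 20 15 83"
  "prog ! 82 = Jmp 104"
  "prog ! 83 = JmpLess 20 16 85"
  "prog ! 84 = Jmp 104"
  "prog ! 85 = JmpLess 15 16 88"
  "prog ! 86 = JmpLess 16 15 88"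
  "prog ! 87 = Jmp 104"
  "prog ! 88 = Sub 23 15 2"
  "prog ! 89 = Sub 24 16 2"
  "prog ! 90 = Add 25 24 3"
  "prog ! 91 = Sub 25 25 23"
  "prog ! 92 = Add 25 25 22"
  "prog ! 93 = Load 25 25"
  "prog ! 94 = JmpLess 23 25 96"
  "prog ! 95 = Jmp 104"
  "prog ! 96 = Store 18 23"
  "prog ! 97 = Add 18 18 2"
  "prog ! 98 = Store 18 24"
  "prog ! 99 = Add 18 18 2"
  "prog ! 100 = Add 15 23 20"
  "prog ! 101 = Add 16 24 20"
  "prog ! 102 = Sub 17 17 2"
  "prog ! 103 = Jmp 52"
  "prog ! 104 = Out 2"
  "prog ! 105 = JmpLess 19 18 109"
  "prog ! 106 = Out 1"
  "prog ! 107 = Out 1"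
  "prog ! 108 = Halt"
  "prog ! 109 = Sub 18 18 2"
  "prog ! 110 = Sub 18 18 2"
  "prog ! 111 = Load 25 18"
  "prog ! 112 = Out 25"
  "prog ! 113 = Add 26 18 2"
  "prog ! 114 = Load 25 26"
  "prog ! 115 = Out 25"
  "prog ! 116 = Jmp 105"
  "prog ! 117 = PLength 1"
  "prog ! 118 = LoadConst 2 1"
  "prog ! 119 = Add 3 0 2"
  "prog ! 120 = Add 14 3 3"
  "prog ! 121 = Add 4 14 2"
  "prog ! 122 = Store 3 2"
  "prog ! 123 = Jmp 6"
  by (simp_all add: prog_def)

section \<open>Symbolic execution\<close>

definition wadd :: "nat \<Rightarrow> nat \<Rightarrow> nat \<Rightarrow> nat" where "wadd w a b = (a + b) mod 2 ^ w"
definition wsub :: "nat \<Rightarrow> nat \<Rightarrow> nat \<Rightarrow> nat" where "wsub w a b = (a + 2 ^ w - b) mod 2 ^ w"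
definition wmul :: "nat \<Rightarrow> nat \<Rightarrow> nat \<Rightarrow> nat" where "wmul w a b = (a * b) mod 2 ^ w"

lemma wadd_eq: "a + b < 2 ^ w \<Longrightarrow> wadd w a b = a + b"
  unfolding wadd_def by (rule mod_less)

lemma wadd_0: "a < 2 ^ w \<Longrightarrow> wadd w a 0 = a"
  using wadd_eq[of a 0 w] by simp

lemma wsub_eq: "b \<le> a \<Longrightarrow> a < 2 ^ w \<Longrightarrow> wsub w a b = a - b"
proof -
  assume "b \<le> a" "a < 2 ^ w"
  then have "a + 2 ^ w - b = (a - b) + 2 ^ w" by linarith
  then have "wsub w a b = (a - b) mod 2 ^ w" by (simp add: wsub_def)
  also have "\<dots> = a - b" using \<open>a < 2 ^ w\<close> by (intro mod_less) linarith
  finally show ?thesis .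
qed

lemma wmul_eq: "a * b < 2 ^ w \<Longrightarrow> wmul w a b = a * b"
  unfolding wmul_def by (rule mod_less)

declare exec_instr.simps[simp del]

lemma exec_instr_Config [simp]:
  "exec_instr w X (LoadConst d v) (Config p r m ou) = Config (Suc p) (r(d := v mod 2 ^ w)) m ou"
  "exec_instr w X (Add d a b) (Config p r m ou) = Config (Suc p) (r(d := wadd w (r a) (r b))) m ou"
  "exec_instr w X (Sub d a b) (Config p r m ou) = Config (Suc p) (r(d := wsub w (r a) (r b))) m ou"
  "exec_instr w X (Mul d a b) (Config p r m ou) = Config (Suc p) (r(d := wmul w (r a) (r b))) m ou"
  "exec_instr w X (Load d a) (Config p r m ou) = Config (Suc p) (r(d := m (r a))) m ou"
  "exec_instr w X (Store a s) (Config p r m ou) = Config (Suc p) r (m(r a := r s)) ou"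
  "exec_instr w X (Jmp t) (Config p r m ou) = Config t r m ou"
  "exec_instr w X (JmpLess a b t) (Config p r m ou) =
     (if r a < r b then Config t r m ou else Config (Suc p) r m ou)"
  "exec_instr w X (Out s) (Config p r m ou) = Config (Suc p) r m (ou @ [r s])"
  "exec_instr w X (PLength d) (Config p r m ou) = Config (Suc p) (r(d := length X)) m ou"
  "exec_instr w X (PLCP d a b c e) (Config p r m ou) =
     Config (Suc p) (r(d := lcp_len (frag X (r a) (r b)) (frag X (r c) (r e)))) m ou"
  "exec_instr w X (PLCPR d a b c e) (Config p r m ou) =
     Config (Suc p) (r(d := lcp_len (rev (frag X (r a) (r b))) (rev (frag X (r c) (r e))))) m ou"
  by (simp_all add: wadd_def wsub_def wmul_def exec_instr.simps)

lemma step_prog_Config [simp]: "step prog w X (Config p r m ou) =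
   (if p < 124 \<and> prog ! p \<noteq> Halt then exec_instr w X (prog ! p) (Config p r m ou) else Config p r m ou)"
  by (auto simp: step_def halted_def)

lemma halted_prog_Config [simp]: "halted prog (Config p r m ou) \<longleftrightarrow> \<not> (p < 124 \<and> prog ! p \<noteq> Halt)"
  by (auto simp: halted_def)

definition reaches :: "nat \<Rightarrow> nat list \<Rightarrow> config \<Rightarrow> (config \<Rightarrow> bool) \<Rightarrow> nat \<Rightarrow> bool" where
  "reaches w X c Q T \<longleftrightarrow> (\<exists>t \<le> T. Q ((step prog w X ^^ t) c))"

lemma reaches_trans:
  "reaches w X c P T1 \<Longrightarrow> (\<And>c'. P c' \<Longrightarrow> reaches w X c' Q T2) \<Longrightarrow> reaches w X c Q (T1 + T2)"
proof -
  assume "reaches w X c P T1" and cont: "\<And>c'. P c' \<Longrightarrow> reaches w X c' Q T2"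
  then obtain t1 where t1: "t1 \<le> T1" "P ((step prog w X ^^ t1) c)" by (auto simp: reaches_def)
  from cont[OF t1(2)] obtain t2 where t2: "t2 \<le> T2" "Q ((step prog w X ^^ t2) ((step prog w X ^^ t1) c))"
    by (auto simp: reaches_def)
  then show ?thesis unfolding reaches_def using t1
    by (intro exI[of _ "t2 + t1"]) (simp add: funpow_add)
qed

lemma reaches_mono:
  "reaches w X c Q T \<Longrightarrow> T \<le> T' \<Longrightarrow> (\<And>c'. Q c' \<Longrightarrow> Q' c') \<Longrightarrow> reaches w X c Q' T'"
  unfolding reaches_def by (meson order_trans)

lemma reaches_now: "Q c \<Longrightarrow> reaches w X c Q T"
  unfolding reaches_def by (intro exI[of _ 0]) simp

lemma reaches_Config:
  "reaches w X (Config (pc c) (regs c) (mem c) (outp c)) Q T \<Longrightarrow> reaches w X c Q T"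
  by simp

text \<open>Unfolded by simp, exec_until executes a block of code symbolically, one instruction at a
  time, until the program counter reaches one of the labels in S.\<close>

fun exec_until :: "nat \<Rightarrow> nat list \<Rightarrow> nat set \<Rightarrow> (config \<Rightarrow> bool) \<Rightarrow> nat \<Rightarrow> config \<Rightarrow> bool" where
  "exec_until w X S Q 0 c \<longleftrightarrow> pc c \<in> S \<and> Q c"
| "exec_until w X S Q (Suc T) c \<longleftrightarrow>
     (if pc c \<in> S then Q c else \<not> halted prog c \<and> exec_until w X S Q T (step prog w X c))"

lemma exec_until_numeral [simp]: "exec_until w X S Q (numeral n) c \<longleftrightarrow>
  (if pc c \<in> S then Q c
   else \<not> halted prog c \<and> exec_until w X S Q (pred_numeral n) (step prog w X c))"
  by (simp add: numeral_eq_Suc)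

lemma reaches_step: "reaches w X (step prog w X c) Q T \<Longrightarrow> reaches w X c Q (Suc T)"
  unfolding reaches_def by (metis Suc_le_mono funpow_Suc_right comp_apply)

lemma exec_until_reaches: "exec_until w X S Q T c \<Longrightarrow> reaches w X c Q T"
  by (induction T arbitrary: c) (auto simp: reaches_now reaches_step split: if_splits)

lemma reaches_by_exec:
  "exec_until w X S Q (pred_numeral n) (step prog w X c) \<Longrightarrow> reaches w X c Q (numeral n)"
  using reaches_step[OF exec_until_reaches, of w X S Q "pred_numeral n" c]
  by (simp add: numeral_eq_Suc)

lemma init_block:
  assumes "0 < w"
  shows "reaches w X (init_config k)
    (\<lambda>c'. pc c' = 6 \<and> mem c' = (\<lambda>_. 0)(wadd w k 1 := 1) \<and> outp c' = [] \<and>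
       regs c' 0 = k \<and> regs c' 1 = length X \<and> regs c' 2 = 1 \<and> regs c' 3 = wadd w k 1 \<and>
       regs c' 14 = wadd w (wadd w k 1) (wadd w k 1) \<and>
       regs c' 4 = wadd w (wadd w (wadd w k 1) (wadd w k 1)) 1 \<and>
       (\<forall>i. i \<notin> {0, 1, 2, 3, 4, 14} \<longrightarrow> regs c' i = 0)) 8"
  unfolding init_config_def
  by (rule reaches_by_exec[where S = "{6}"]) (simp add: assms)

lemma row_test_block:
  assumes "pc c = 6" "regs c 0 = k" "regs c 1 = n" "regs c 2 = 1" "regs c 3 = K1" "regs c 4 = W"
    "regs c 5 = e" "regs c 7 = cb" "regs c 20 = 0"
  shows "reaches w X c
    (\<lambda>c'. mem c' = mem c \<and>
      (if n < mem c (wadd w cb K1)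
       then pc c' = 47 \<and> outp c' = outp c \<and> (\<forall>i. i \<notin> {11, 12} \<longrightarrow> regs c' i = regs c i)
       else if e < k
       then pc c' = 16 \<and> outp c' = outp c \<and> regs c' 8 = wadd w cb 0 \<and> regs c' 7 = wadd w cb W \<and>
         regs c' 5 = wadd w e 1 \<and> regs c' 6 = wadd w 1 0 \<and>
         (\<forall>i. i \<notin> {5, 6, 7, 8, 11, 12} \<longrightarrow> regs c' i = regs c i)
       else pc c' = 11 \<and> outp c' = outp c @ [0])) 10"
  by (rule reaches_Config, rule reaches_by_exec[where S = "{11, 16, 47}"])
    (simp add: assms assms[unfolded One_nat_def])

text \<open>The value of register 10 after each segment of the code for one diagonal, as a function
  of the words read from the previous row; column_value_eq identifies the composite with
  slide_diag of front_candidate.\<close>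

definition sub_cand :: "nat \<Rightarrow> nat \<Rightarrow> nat \<Rightarrow> nat \<Rightarrow> nat" where
  "sub_cand w K1 j s = (if j < K1 \<or> K1 < j then (if s < 1 then s else wadd w s 1) else s)"

definition del_cand :: "nat \<Rightarrow> nat \<Rightarrow> nat \<Rightarrow> nat" where
  "del_cand w v s1 = (if s1 < 1 then v else if wadd w s1 1 < v then v else wadd w (wadd w s1 1) 0)"

definition ins_cand :: "nat \<Rightarrow> nat \<Rightarrow> nat \<Rightarrow> nat" where
  "ins_cand w v s0 = (if s0 < v then v else wadd w s0 0)"

definition slide_word :: "nat \<Rightarrow> nat list \<Rightarrow> nat \<Rightarrow> nat \<Rightarrow> nat \<Rightarrow> nat \<Rightarrow> nat" where
  "slide_word w X n K1 j v = (if v < 1 then v else if j < K1 \<or> K1 < j then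
     wadd w v (lcp_len (frag X (wsub w v 1) n) (frag X (wsub w (wadd w (wsub w v 1) j) K1) n))
     else v)"

lemma sub_cand_block:
  assumes "pc c = 16" "regs c 2 = 1" "regs c 3 = K1" "regs c 6 = j" "regs c 8 = pb"
  shows "reaches w X c
    (\<lambda>c'. pc c' = 23 \<and> mem c' = mem c \<and> outp c' = outp c \<and> regs c' 11 = wadd w pb j \<and>
       regs c' 10 = sub_cand w K1 j (mem c (wadd w pb j)) \<and>
       (\<forall>i. i \<notin> {10, 11} \<longrightarrow> regs c' i = regs c i)) 7"
  by (rule reaches_Config, rule reaches_by_exec[where S = "{23}"])
    (simp add: assms assms[unfolded One_nat_def] sub_cand_def)

lemma del_cand_block:
  assumes "pc c = 23" "regs c 2 = 1" "regs c 10 = v" "regs c 11 = a" "regs c 20 = 0"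
  shows "reaches w X c
    (\<lambda>c'. pc c' = 29 \<and> mem c' = mem c \<and> outp c' = outp c \<and>
       regs c' 10 = del_cand w v (mem c (wadd w a 1)) \<and>
       (\<forall>i. i \<notin> {10, 12} \<longrightarrow> regs c' i = regs c i)) 7"
  by (rule reaches_Config, rule reaches_by_exec[where S = "{29}"])
    (simp add: assms assms[unfolded One_nat_def] del_cand_def)

lemma ins_cand_block:
  assumes "pc c = 29" "regs c 2 = 1" "regs c 10 = v" "regs c 11 = a" "regs c 20 = 0"
  shows "reaches w X c
    (\<lambda>c'. pc c' = 33 \<and> mem c' = mem c \<and> outp c' = outp c \<and>
       regs c' 10 = ins_cand w v (mem c (wsub w a 1)) \<and>
       (\<forall>i. i \<notin> {10, 12} \<longrightarrow> regs c' i = regs c i)) 5"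
  by (rule reaches_Config, rule reaches_by_exec[where S = "{33}"])
    (simp add: assms assms[unfolded One_nat_def] ins_cand_def)

lemma slide_block:
  assumes "pc c = 33" "regs c 1 = n" "regs c 2 = 1" "regs c 3 = K1" "regs c 6 = j" "regs c 10 = v"
  shows "reaches w X c
    (\<lambda>c'. pc c' = 42 \<and> mem c' = mem c \<and> outp c' = outp c \<and>
       regs c' 10 = slide_word w X n K1 j v \<and>
       (\<forall>i. i \<notin> {10, 12, 13} \<longrightarrow> regs c' i = regs c i)) 10"
  by (rule reaches_Config, rule reaches_by_exec[where S = "{42}"])
    (simp add: assms assms[unfolded One_nat_def] slide_word_def)

lemma store_block:
  assumes "pc c = 42" "regs c 2 = 1" "regs c 6 = j" "regs c 7 = cb" "regs c 10 = v" "regs c 14 = J2"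
  shows "reaches w X c
    (\<lambda>c'. pc c' = (if wadd w j 1 < J2 then 16 else 6) \<and> mem c' = (mem c)(wadd w cb j := v) \<and>
       outp c' = outp c \<and> regs c' 6 = wadd w j 1 \<and>
       (\<forall>i. i \<notin> {6, 11} \<longrightarrow> regs c' i = regs c i)) 5"
  by (rule reaches_Config, rule reaches_by_exec[where S = "{6, 16}"]) (simp add: assms)

definition column_value :: "nat \<Rightarrow> nat list \<Rightarrow> nat \<Rightarrow> (nat \<Rightarrow> nat) \<Rightarrow> nat \<Rightarrow> nat \<Rightarrow> nat \<Rightarrow> nat" where
  "column_value w X n m pb K1 j =
     slide_word w X n K1 j (ins_cand w (del_cand w (sub_cand w K1 j (m (wadd w pb j)))
       (m (wadd w (wadd w pb j) 1))) (m (wsub w (wadd w pb j) 1)))"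

lemma column_block:
  assumes a: "pc c = 16" "regs c 1 = n" "regs c 2 = 1" "regs c 3 = K1" "regs c 6 = j"
    "regs c 7 = cb" "regs c 8 = pb" "regs c 14 = J2" "regs c 20 = 0"
  shows "reaches w X c (\<lambda>c'. pc c' = (if wadd w j 1 < J2 then 16 else 6) \<and>
     mem c' = (mem c)(wadd w cb j := column_value w X n (mem c) pb K1 j) \<and> outp c' = outp c \<and>
     regs c' 6 = wadd w j 1 \<and> (\<forall>i. i \<notin> {6, 10, 11, 12, 13} \<longrightarrow> regs c' i = regs c i))
     (7 + (7 + (5 + (10 + 5))))"
  apply (rule reaches_trans[OF sub_cand_block[OF a(1,3,4,5,7)]])
  apply (rule reaches_trans[OF del_cand_block], (simp_all add: a)[5])
  apply (rule reaches_trans[OF ins_cand_block], (simp_all add: a)[5])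
  apply (rule reaches_trans[OF slide_block], (simp_all add: a)[6])
  apply (rule reaches_mono[OF store_block], (simp_all add: a)[7])
  apply (auto simp: column_value_def a a[unfolded One_nat_def])
  done

lemma column_value_eq:
  assumes b: "s \<le> B" "s1 \<le> B" "s0 \<le> B" "B + 2 + j + length X < 2 ^ w"
    and v: "0 < front_candidate K1 j s s1 s0 \<Longrightarrow> K1 \<le> front_candidate K1 j s s1 s0 - 1 + j"
  shows "slide_word w X (length X) K1 j (ins_cand w (del_cand w (sub_cand w K1 j s) s1) s0) =
    slide_diag X K1 j (front_candidate K1 j s s1 s0)"
proof -
  define v where "v = front_candidate K1 j s s1 s0"
  have a1: "wadd w s 1 = s + 1" "wadd w s1 1 = s1 + 1" "wadd w (s1 + 1) 0 = s1 + 1" "wadd w s0 0 = s0"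
    using b by (intro wadd_eq wadd_0; linarith)+
  have v3: "ins_cand w (del_cand w (sub_cand w K1 j s) s1) s0 = v"
    unfolding sub_cand_def del_cand_def ins_cand_def a1 v_def front_candidate_def by (auto simp: max_def)
  have vb: "v \<le> B + 1" using b by (auto simp: v_def front_candidate_def)
  have l: "lcp_len (drop (v - 1) X) (drop (v - 1 + j - K1) X) \<le> length X"
    using lcp_len_le[of "drop (v - 1) X" "drop (v - 1 + j - K1) X"] by (auto intro: le_trans[OF _ diff_le_self])
  show ?thesis
  proof (cases "0 < v \<and> j \<noteq> K1")
    case True
    then have vv: "K1 \<le> v - 1 + j" using v by (simp add: v_def)
    have e1: "wsub w v 1 = v - 1" using True vb b by (simp add: wsub_eq)
    have e2: "wadd w (v - 1) j = v - 1 + j" using vb b by (simp add: wadd_eq)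
    have e3: "wsub w (v - 1 + j) K1 = v - 1 + j - K1" using vv vb b by (simp add: wsub_eq)
    have e4: "wadd w v (lcp_len (drop (v - 1) X) (drop (v - 1 + j - K1) X)) =
        v + lcp_len (drop (v - 1) X) (drop (v - 1 + j - K1) X)"
      using vb b l by (simp add: wadd_eq)
    have "j < K1 \<or> K1 < j" using True by auto
    have tk: "take (length X) X = X" by simp
    show ?thesis using True \<open>j < K1 \<or> K1 < j\<close>
      unfolding v3 v_def[symmetric] slide_word_def frag_def tk e1 e2 e3 e4
      by (simp add: slide_diag_def)
  next
    case False
    then show ?thesis unfolding v3 v_def[symmetric] by (auto simp: slide_word_def slide_diag_def)
  qed
qed

lemma found_block:
  assumes "pc c = 47" "regs c 1 = n" "regs c 3 = K1" "regs c 4 = W" "regs c 5 = e" "regs c 20 = 0"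
  shows "reaches w X c
    (\<lambda>c'. pc c' = 52 \<and> mem c' = mem c \<and> outp c' = outp c \<and>
       regs c' 15 = wadd w n 0 \<and> regs c' 16 = wadd w n 0 \<and> regs c' 17 = wadd w e 0 \<and>
       regs c' 19 = wmul w K1 W \<and> regs c' 18 = wadd w (wmul w K1 W) 0 \<and>
       (\<forall>i. i \<notin> {15, 16, 17, 18, 19} \<longrightarrow> regs c' i = regs c i)) 5"
  by (rule reaches_Config, rule reaches_by_exec[where S = "{52}"])
    (simp add: assms assms[unfolded One_nat_def])

lemma tb_slide_block:
  assumes "pc c = 52" "regs c 15 = x" "regs c 16 = y" "regs c 20 = 0"
  shows "reaches w X c
    (\<lambda>c'. mem c' = mem c \<and> outp c' = outp c \<and>
      (if 0 < x \<or> 0 < y then pc c' = 61 \<and>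
          regs c' 15 = (if x < y \<or> y < x then wsub w x (lcs_len X x y) else x) \<and>
          regs c' 16 = (if x < y \<or> y < x then wsub w y (lcs_len X x y) else y) \<and>
          (\<forall>i. i \<notin> {15, 16, 21} \<longrightarrow> regs c' i = regs c i)
       else pc c' = 104 \<and> regs c' = regs c)) 9"
  by (rule reaches_Config, rule reaches_by_exec[where S = "{61, 104}"])
    (simp add: assms lcs_len_def)

definition tb_reach_test :: "nat \<Rightarrow> (nat \<Rightarrow> nat) \<Rightarrow> nat \<Rightarrow> nat \<Rightarrow> nat \<Rightarrow> nat \<Rightarrow> bool" where
  "tb_reach_test w m rb K1 x' y' \<longleftrightarrow> x' < m (wadd w (wsub w (wadd w y' K1) x') rb)"

definition tb_select ::
  "nat \<Rightarrow> (nat \<Rightarrow> nat) \<Rightarrow> nat \<Rightarrow> nat \<Rightarrow> nat \<Rightarrow> nat \<Rightarrow> (nat \<times> nat) option" where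
  "tb_select w m rb K1 x y =
    (if 0 < x \<and> tb_reach_test w m rb K1 (wsub w x 1) (wadd w y 0) then Some (wsub w x 1, wadd w y 0)
     else if 0 < y \<and> tb_reach_test w m rb K1 (wadd w x 0) (wsub w y 1) then Some (wadd w x 0, wsub w y 1)
     else if 0 < x \<and> 0 < y \<and> (x < y \<or> y < x) \<and> tb_reach_test w m rb K1 (wsub w x 1) (wsub w y 1)
       then Some (wsub w x 1, wsub w y 1)
     else None)"

lemma tb_select_block:
  assumes "pc c = 61" "regs c 2 = 1" "regs c 3 = K1" "regs c 4 = W" "regs c 15 = x" "regs c 16 = y"
    "regs c 17 = b" "regs c 20 = 0"
  shows "reaches w X c
    (\<lambda>c'. mem c' = mem c \<and> outp c' = outp c \<and>
      (case tb_select w (mem c) (wmul w (wsub w b 1) W) K1 x y of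
        Some (x', y') \<Rightarrow> pc c' = 96 \<and> regs c' 23 = x' \<and> regs c' 24 = y' \<and>
          (\<forall>i. i \<notin> {22, 23, 24, 25} \<longrightarrow> regs c' i = regs c i)
      | None \<Rightarrow> pc c' = 104)) 35"
  by (rule reaches_Config, rule reaches_by_exec[where S = "{96, 104}"])
    (simp add: assms assms[unfolded One_nat_def] tb_select_def tb_reach_test_def)

lemma tb_push_block:
  assumes "pc c = 96" "regs c 2 = 1" "regs c 17 = b" "regs c 18 = sp" "regs c 20 = 0"
    "regs c 23 = x'" "regs c 24 = y'"
  shows "reaches w X c
    (\<lambda>c'. pc c' = 52 \<and> mem c' = (mem c)(sp := x', wadd w sp 1 := y') \<and> outp c' = outp c \<and>
       regs c' 15 = wadd w x' 0 \<and> regs c' 16 = wadd w y' 0 \<and> regs c' 17 = wsub w b 1 \<and>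
       regs c' 18 = wadd w (wadd w sp 1) 1 \<and>
       (\<forall>i. i \<notin> {15, 16, 17, 18} \<longrightarrow> regs c' i = regs c i)) 8"
  by (rule reaches_Config, rule reaches_by_exec[where S = "{52}"])
    (simp add: assms assms[unfolded One_nat_def])

lemma out_flag_block:
  assumes "pc c = 104" "regs c 2 = 1"
  shows "reaches w X c
    (\<lambda>c'. pc c' = 105 \<and> mem c' = mem c \<and> outp c' = outp c @ [1] \<and> regs c' = regs c) 2"
  by (rule reaches_Config, rule reaches_by_exec[where S = "{105}"]) (simp add: assms)

lemma pop_block:
  assumes "pc c = 105" "regs c 1 = n" "regs c 2 = 1" "regs c 18 = sp" "regs c 19 = sb"
  shows "reaches w X c
    (\<lambda>c'. mem c' = mem c \<and>
       (if sb < sp then pc c' = 105 \<and> regs c' 18 = wsub w (wsub w sp 1) 1 \<and>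
          outp c' = outp c @ [mem c (wsub w (wsub w sp 1) 1), mem c (wadd w (wsub w (wsub w sp 1) 1) 1)] \<and>
          (\<forall>i. i \<notin> {18, 25, 26} \<longrightarrow> regs c' i = regs c i)
        else pc c' = 108 \<and> outp c' = outp c @ [n, n])) 10"
  by (rule reaches_Config, rule reaches_by_exec[where S = "{105, 108}"])
    (simp add: assms assms[unfolded One_nat_def])

section \<open>Correctness of the program\<close>

locale lv_machine =
  fixes w :: nat and X :: "nat list" and k :: nat
  assumes word_size: "4 * (length X + k + 2) * (length X + k + 2) \<le> 2 ^ w"
begin

abbreviation "n \<equiv> length X"
abbreviation "W \<equiv> 2 * k + 3"
abbreviation "stack_base \<equiv> Suc k * (2 * k + 3)"

text \<open>All addresses and values handled by the program stay below this bound, so the word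
  operations never wrap around.\<close>

lemma word_large: "stack_base + 3 * n + 4 * k + 8 < 2 ^ w"
proof -
  have "stack_base + 3 * n + 4 * k + 8 < 4 * (n + k + 2) * (n + k + 2)"
    by (simp add: algebra_simps)
  then show ?thesis using word_size by linarith
qed

lemma w_pos: "0 < w"
  using word_large by (cases w) auto

lemma row_end_le: "e \<le> k \<Longrightarrow> e * W + W \<le> stack_base"
  using mult_le_mono1[of "Suc e" "Suc k" W] by simp

definition table_entry :: "nat \<Rightarrow> nat" where
  "table_entry a = front X k (a div W) (a mod W)"

definition table_mem :: "nat \<Rightarrow> nat \<Rightarrow> nat" where
  "table_mem lim a = (if a < lim then table_entry a else 0)"

lemma table_entry_at: "r < W \<Longrightarrow> table_entry (q * W + r) = front X k q r"
  by (simp add: table_entry_def)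

lemma table_mem_Suc: "(table_mem a)(a := table_entry a) = table_mem (Suc a)"
  by (auto simp: table_mem_def)

lemma table_mem_Suc_0: "table_entry a = 0 \<Longrightarrow> table_mem (Suc a) = table_mem a"
  by (auto simp: table_mem_def less_Suc_eq)

definition const_regs :: "(nat \<Rightarrow> nat) \<Rightarrow> bool" where
  "const_regs r \<longleftrightarrow>
     r 0 = k \<and> r 1 = n \<and> r 2 = 1 \<and> r 3 = Suc k \<and> r 4 = W \<and> r 14 = 2 * k + 2 \<and> r 20 = 0"

lemma const_regs_eqI:
  "const_regs r \<Longrightarrow> (\<And>i. i \<in> {0, 1, 2, 3, 4, 14, 20} \<Longrightarrow> r' i = r i) \<Longrightarrow> const_regs r'"
  by (simp add: const_regs_def)

definition col_inv :: "nat \<Rightarrow> nat \<Rightarrow> config \<Rightarrow> bool" where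
  "col_inv e j c \<longleftrightarrow> pc c = 16 \<and> 1 \<le> e \<and> e \<le> k \<and> 1 \<le> j \<and> j \<le> 2 * k + 1 \<and>
     const_regs (regs c) \<and> regs c 5 = e \<and> regs c 6 = j \<and> regs c 7 = e * W \<and>
     regs c 8 = (e - 1) * W \<and> mem c = table_mem (e * W + j) \<and> outp c = []"

definition row_inv :: "nat \<Rightarrow> config \<Rightarrow> bool" where
  "row_inv e c \<longleftrightarrow> pc c = 6 \<and> e \<le> k \<and> const_regs (regs c) \<and> regs c 5 = e \<and>
     regs c 7 = e * W \<and> mem c = table_mem (Suc e * W) \<and> outp c = []"

lemma column_value_correct:
  assumes "1 \<le> e" "e \<le> k" "1 \<le> j" "j \<le> 2 * k + 1"
  shows "column_value w X n (table_mem (e * W + j)) ((e - 1) * W) (Suc k) j = front X k e j"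
proof -
  define pb where "pb = (e - 1) * W"
  have pb: "pb + W = e * W" using assms(1) by (cases e) (auto simp: pb_def)
  have "e * W + W \<le> stack_base" using row_end_le[OF assms(2)] .
  note bounds = this word_large pb assms
  have m1: "wadd w pb j = pb + j" using bounds by (intro wadd_eq) linarith
  have m2: "wadd w (pb + j) 1 = pb + j + 1" using bounds by (intro wadd_eq) linarith
  have m3: "wsub w (pb + j) 1 = pb + (j - 1)" using bounds by (subst wsub_eq) linarith+
  have s: "table_mem (e * W + j) (pb + j) = front X k (e - 1) j"
    using pb assms table_entry_at[of j "e - 1"] by (simp add: table_mem_def pb_def)
  have s1: "table_mem (e * W + j) (pb + j + 1) = front X k (e - 1) (Suc j)"
    using pb assms table_entry_at[of "Suc j" "e - 1"] by (simp add: table_mem_def pb_def add.assoc)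
  have s0: "table_mem (e * W + j) (pb + (j - 1)) = front X k (e - 1) (j - 1)"
    using pb assms table_entry_at[of "j - 1" "e - 1"] by (simp add: table_mem_def pb_def)
  have le: "front X k (e - 1) j' \<le> n + k + 2" for j'
    using front_le[of X k "e - 1" j'] assms(2) by linarith
  have "front X k e j = slide_diag X (Suc k) j (front_candidate (Suc k) j
      (front X k (e - 1) j) (front X k (e - 1) (Suc j)) (front X k (e - 1) (j - 1)))"
    using front_Suc[of j k X "e - 1"] assms by simp
  also have "\<dots> = column_value w X n (table_mem (e * W + j)) pb (Suc k) j"
    unfolding column_value_def m1 m2 m3 s s1 s0
  proof (rule column_value_eq[symmetric, where B = "n + k + 2", OF le le le])
    show "n + k + 2 + 2 + j + n < 2 ^ w" using bounds by linarith
    assume "0 < front_candidate (Suc k) j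
      (front X k (e - 1) j) (front X k (e - 1) (Suc j)) (front X k (e - 1) (j - 1))"
    from front_candidate_sound[OF front_sound assms(3) this]
    show "Suc k \<le> front_candidate (Suc k) j (front X k (e - 1) j) (front X k (e - 1) (Suc j))
      (front X k (e - 1) (j - 1)) - 1 + j"
      unfolding diag_reached_def by (rule conjunct1)
  qed
  finally show ?thesis by (simp add: pb_def)
qed

lemma col_step:
  assumes inv: "col_inv e j c"
  shows "reaches w X c (\<lambda>c'. if j + 1 < 2 * k + 2 then col_inv e (j + 1) c' else row_inv e c') 34"
proof -
  define cb where "cb = e * W"
  have I: "pc c = 16" "1 \<le> e" "e \<le> k" "1 \<le> j" "j \<le> 2 * k + 1" "const_regs (regs c)"
     "regs c 5 = e" "regs c 6 = j" "regs c 7 = cb" "regs c 8 = (e - 1) * W"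
     "mem c = table_mem (cb + j)" "outp c = []"
    using inv by (auto simp: col_inv_def cb_def)
  have R: "regs c 1 = n" "regs c 2 = 1" "regs c 3 = Suc k" "regs c 14 = 2 * k + 2" "regs c 20 = 0"
    using I(6) by (auto simp: const_regs_def)
  have "cb + W \<le> stack_base" using row_end_le[OF I(3)] by (simp add: cb_def)
  then have m4: "wadd w j 1 = j + 1" and m5: "wadd w cb j = cb + j"
    using word_large I by (intro wadd_eq; linarith)+
  have stored: "(mem c)(cb + j := column_value w X n (mem c) ((e - 1) * W) (Suc k) j) =
      table_mem (Suc (cb + j))"
    using column_value_correct[OF I(2-5)] table_entry_at[of j e] I(5) I(11) table_mem_Suc[of "cb + j"]
    by (simp add: cb_def)
  have "table_entry (cb + (2 * k + 2)) = 0"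
    using table_entry_at[of "2 * k + 2" e] front_sentinels(2) by (simp add: cb_def)
  moreover have "Suc (cb + (2 * k + 2)) = Suc e * W" by (simp add: cb_def)
  ultimately have row_end: "table_mem (cb + (2 * k + 2)) = table_mem (Suc e * W)"
    using table_mem_Suc_0 by metis
  show ?thesis
  proof (rule reaches_mono[OF column_block[OF I(1) R(1,2,3) I(8,9,10) R(4,5)]])
    fix c' assume h: "pc c' = (if wadd w j 1 < 2 * k + 2 then 16 else 6) \<and>
      mem c' = (mem c)(wadd w cb j := column_value w X n (mem c) ((e - 1) * W) (Suc k) j) \<and>
      outp c' = outp c \<and> regs c' 6 = wadd w j 1 \<and>
      (\<forall>i. i \<notin> {6, 10, 11, 12, 13} \<longrightarrow> regs c' i = regs c i)"
    then have "const_regs (regs c')" "mem c' = table_mem (Suc (cb + j))"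
      using I(6) stored m5 by (simp_all add: const_regs_def)
    with h I m4 row_end show "if j + 1 < 2 * k + 2 then col_inv e (j + 1) c' else row_inv e c'"
      by (auto simp: col_inv_def row_inv_def cb_def)
  qed simp
qed

lemma col_loop: "col_inv e j c \<Longrightarrow> reaches w X c (row_inv e) (34 * (2 * k + 2 - j))"
proof (induction "2 * k + 1 - j" arbitrary: j c)
  case 0
  then have "j = 2 * k + 1" by (auto simp: col_inv_def)
  from col_step[OF 0(2)] show ?case by (rule reaches_mono) (use \<open>j = 2 * k + 1\<close> in auto)
next
  case (Suc d)
  then have j: "j + 1 < 2 * k + 2" by (auto simp: col_inv_def)
  have "reaches w X c (col_inv e (j + 1)) 34"
    using col_step[OF Suc(3)] by (rule reaches_mono) (use j in auto)
  moreover have "reaches w X c' (row_inv e) (34 * (2 * k + 2 - (j + 1)))"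
    if "col_inv e (j + 1) c'" for c'
    using Suc(1)[of "j + 1" c'] Suc(2) that by simp
  ultimately have "reaches w X c (row_inv e) (34 + 34 * (2 * k + 2 - (j + 1)))"
    by (rule reaches_trans)
  moreover have "34 + 34 * (2 * k + 2 - (j + 1)) = 34 * (2 * k + 2 - j)" using j by simp
  ultimately show ?case by simp
qed

definition found_inv :: "config \<Rightarrow> bool" where
  "found_inv c \<longleftrightarrow> pc c = 47 \<and> selfed X \<le> k \<and> const_regs (regs c) \<and> regs c 5 = selfed X \<and>
     mem c = table_mem (Suc (selfed X) * W) \<and> outp c = []"

definition fail_inv :: "config \<Rightarrow> bool" where
  "fail_inv c \<longleftrightarrow> pc c = 11 \<and> outp c = [0] \<and> k < selfed X"

lemma row_step:
  assumes inv: "row_inv e c" and e: "e \<le> selfed X"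
  shows "reaches w X c (\<lambda>c'. if selfed X = e then found_inv c'
     else if e < k then col_inv (Suc e) 1 c' else fail_inv c') 10"
proof -
  define cb where "cb = e * W"
  have I: "pc c = 6" "e \<le> k" "const_regs (regs c)" "regs c 5 = e" "regs c 7 = cb"
    "mem c = table_mem (Suc e * W)" "outp c = []"
    using inv by (auto simp: row_inv_def cb_def)
  have R: "regs c 0 = k" "regs c 1 = n" "regs c 2 = 1" "regs c 3 = Suc k" "regs c 4 = W"
    "regs c 20 = 0"
    using I(3) by (auto simp: const_regs_def)
  have "cb + W \<le> stack_base" using row_end_le[OF I(2)] by (simp add: cb_def)
  note bounds = this word_large I(2)
  have m1: "wadd w cb (Suc k) = cb + Suc k" using bounds by (intro wadd_eq) linarith
  have m2: "wadd w cb 0 = cb" "wadd w 1 0 = 1" using bounds by (intro wadd_0; linarith)+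
  have m3: "wadd w cb W = cb + W" "wadd w e 1 = e + 1" using bounds by (intro wadd_eq; linarith)+
  have "mem c (wadd w cb (Suc k)) = front X k e (Suc k)"
    unfolding m1 I(6) using table_entry_at[of "Suc k" e] by (simp add: table_mem_def cb_def)
  then have found: "n < mem c (wadd w cb (Suc k)) \<longleftrightarrow> selfed X = e"
    using selfed_le_iff_front[OF I(2), of X] e by auto
  have "table_entry (Suc e * W) = 0"
    using table_entry_at[of 0 "Suc e"] front_sentinels(1)[of X k "Suc e"] by simp
  then have next_row: "table_mem (Suc e * W) = table_mem (Suc e * W + 1)"
    using table_mem_Suc_0 by (metis Suc_eq_plus1)
  show ?thesis
  proof (rule reaches_mono[OF row_test_block[OF I(1) R(1-5) I(4,5) R(6)]])
    fix c' assume h: "mem c' = mem c \<and>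
      (if n < mem c (wadd w cb (Suc k))
       then pc c' = 47 \<and> outp c' = outp c \<and> (\<forall>i. i \<notin> {11, 12} \<longrightarrow> regs c' i = regs c i)
       else if e < k
       then pc c' = 16 \<and> outp c' = outp c \<and> regs c' 8 = wadd w cb 0 \<and> regs c' 7 = wadd w cb W \<and>
         regs c' 5 = wadd w e 1 \<and> regs c' 6 = wadd w 1 0 \<and>
         (\<forall>i. i \<notin> {5, 6, 7, 8, 11, 12} \<longrightarrow> regs c' i = regs c i)
       else pc c' = 11 \<and> outp c' = outp c @ [0])"
    show "if selfed X = e then found_inv c' else if e < k then col_inv (Suc e) 1 c' else fail_inv c'"
    proof (cases "selfed X = e")
      case True
      then show ?thesis using h found I R by (simp add: found_inv_def const_regs_def)
    next
      case False
      then show ?thesis using h found I R e m2 m3 next_row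
        by (auto simp: col_inv_def fail_inv_def const_regs_def cb_def)
    qed
  qed simp
qed

definition row_time :: nat where "row_time = 10 + 34 * (2 * k + 1)"

lemma row_loop:
  "row_inv e c \<Longrightarrow> e \<le> selfed X \<Longrightarrow>
   reaches w X c (\<lambda>c'. found_inv c' \<or> fail_inv c') ((k + 1 - e) * row_time)"
proof (induction "k - e" arbitrary: e c)
  case 0
  then have "e = k" by (auto simp: row_inv_def)
  from row_step[OF 0(2,3)] show ?case
    by (rule reaches_mono) (use \<open>e = k\<close> in \<open>auto simp: row_time_def split: if_splits\<close>)
next
  case (Suc d)
  then have ek: "e < k" by (auto simp: row_inv_def)
  have "reaches w X c' (\<lambda>c'. found_inv c' \<or> fail_inv c') (34 * (2 * k + 1) + (k - e) * row_time)"
    if h: "if selfed X = e then found_inv c' else if e < k then col_inv (Suc e) 1 c' else fail_inv c'"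
    for c'
  proof (cases "selfed X = e")
    case True
    then show ?thesis using h by (simp add: reaches_now)
  next
    case False
    have "reaches w X c' (row_inv (Suc e)) (34 * (2 * k + 1))"
      using col_loop[of "Suc e" 1 c'] h False ek by simp
    moreover have "reaches w X c'' (\<lambda>c'. found_inv c' \<or> fail_inv c') ((k - e) * row_time)"
      if "row_inv (Suc e) c''" for c''
      using Suc(1)[of "Suc e" c''] Suc(2,4) False that by simp
    ultimately show ?thesis by (rule reaches_trans)
  qed
  with row_step[OF Suc(3,4)]
  have "reaches w X c (\<lambda>c'. found_inv c' \<or> fail_inv c')
      (10 + (34 * (2 * k + 1) + (k - e) * row_time))"
    by (rule reaches_trans)
  moreover have "10 + (34 * (2 * k + 1) + (k - e) * row_time) = (k + 1 - e) * row_time"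
    using ek by (simp add: row_time_def Suc_diff_le)
  ultimately show ?case by simp
qed

definition stack_words :: "(nat \<times> nat) list \<Rightarrow> nat list" where
  "stack_words S = encode_points (rev (path_breaks X S))"

definition trace_mem :: "nat \<Rightarrow> nat list \<Rightarrow> nat \<Rightarrow> nat" where
  "trace_mem E st a = (if a < stack_base then table_mem (Suc E * W) a
     else if a - stack_base < length st then st ! (a - stack_base) else 0)"

definition tb_inv :: "nat \<Rightarrow> nat \<Rightarrow> nat \<Rightarrow> nat \<Rightarrow> (nat \<times> nat) list \<Rightarrow> config \<Rightarrow> bool" where
  "tb_inv E x y c S cfg \<longleftrightarrow> pc cfg = 52 \<and> E \<le> k \<and> const_regs (regs cfg) \<and>
     regs cfg 19 = stack_base \<and> regs cfg 18 = stack_base + length (stack_words S) \<and>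
     regs cfg 15 = x \<and> regs cfg 16 = y \<and> regs cfg 17 = c \<and>
     mem cfg = trace_mem E (stack_words S) \<and> outp cfg = [] \<and> trace_inv X E x y c S"

lemma tb_reach_test_iff:
  assumes c: "0 < c" "c \<le> E" "E \<le> k"
    and xy: "x' \<le> n" "y' \<le> n" "x' \<le> y' + Suc k" "y' \<le> x' + Suc k"
  shows "tb_reach_test w (trace_mem E st) ((c - 1) * W) (Suc k) x' y' \<longleftrightarrow>
    self_reach X (x', y') (c - 1)"
proof -
  define j where "j = y' + Suc k - x'"
  have j: "j \<le> 2 * k + 2" "Suc k \<le> x' + j" "x' + j - Suc k = y'" using xy by (auto simp: j_def)
  have row: "(c - 1) * W + W = c * W" using c by (cases c) auto
  have "c * W \<le> E * W" "E * W + W \<le> stack_base" using c row_end_le[of E] by simp_all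
  note bounds = this word_large xy j row
  have a1: "wadd w y' (Suc k) = y' + Suc k" using bounds by (intro wadd_eq) linarith
  have a2: "wsub w (y' + Suc k) x' = j" unfolding j_def using bounds by (intro wsub_eq) linarith+
  have a3: "wadd w j ((c - 1) * W) = (c - 1) * W + j" using bounds by (subst wadd_eq) linarith+
  have "Suc E * W = E * W + W" "stack_base = k * W + W" "E * W \<le> k * W" using c by simp_all
  then have "(c - 1) * W + j < stack_base" "(c - 1) * W + j < Suc E * W"
    using bounds by linarith+
  then have "trace_mem E st ((c - 1) * W + j) = front X k (c - 1) j"
    using table_entry_at[of j "c - 1"] j by (simp add: trace_mem_def table_mem_def)
  then have "tb_reach_test w (trace_mem E st) ((c - 1) * W) (Suc k) x' y' \<longleftrightarrow>
      x' < front X k (c - 1) j"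
    unfolding tb_reach_test_def a1 a2 a3 by simp
  also have "\<dots> \<longleftrightarrow> self_reach X (x', x' + j - Suc k) (c - 1)"
    using front_iff[of "c - 1" k x' j X] c j by simp
  finally show ?thesis using j by simp
qed

lemma tb_select_eq:
  assumes c: "0 < c" "c \<le> E" "E \<le> k"
    and xy: "x \<le> n" "y \<le> n" "x \<le> y + c" "y \<le> x + c"
  shows "tb_select w (trace_mem E st) (wmul w (wsub w c 1) W) (Suc k) x y = pred_choice X c x y"
proof -
  have "c * W + W \<le> stack_base" using row_end_le[of c] c by simp
  moreover have "(c - 1) * W + W = c * W" using c by (cases c) auto
  ultimately have "(c - 1) * W < 2 ^ w" using word_large by linarith
  moreover have "wsub w c 1 = c - 1" using word_large c by (intro wsub_eq) linarith+
  ultimately have rb: "wmul w (wsub w c 1) W = (c - 1) * W" by (simp add: wmul_eq)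
  have e1: "0 < x \<Longrightarrow> wsub w x 1 = x - 1" "0 < y \<Longrightarrow> wsub w y 1 = y - 1"
    using word_large xy by (intro wsub_eq; linarith)+
  have e2: "wadd w x 0 = x" "wadd w y 0 = y" using word_large xy by (intro wadd_0; linarith)+
  have test: "tb_reach_test w (trace_mem E st) ((c - 1) * W) (Suc k) x' y' \<longleftrightarrow>
      self_reach X (x', y') (c - 1)"
    if "x' \<le> x" "y' \<le> y" "x - 1 \<le> x'" "y - 1 \<le> y'" for x' y'
    using that c xy by (intro tb_reach_test_iff) auto
  show ?thesis unfolding tb_select_def pred_choice_def rb e2
    using e1 test by (auto simp: linorder_neq_iff)
qed

lemma tb_push_step:
  assumes inv: "tb_inv E x y c S cfg"
    and step: "0 < c" "trace_inv X E (fst p) (snd p) (c - 1) (p # S')"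
      "path_breaks X (p # S') = p # path_breaks X S"
    and c2: "pc c2 = 96" "mem c2 = mem cfg" "outp c2 = []" "regs c2 23 = fst p"
      "regs c2 24 = snd p" "\<forall>i. i \<notin> {15, 16, 21, 22, 23, 24, 25} \<longrightarrow> regs c2 i = regs cfg i"
  shows "reaches w X c2 (tb_inv E (fst p) (snd p) (c - 1) (p # S')) 8"
proof -
  have I: "E \<le> k" "const_regs (regs cfg)" "regs cfg 19 = stack_base"
    "regs cfg 18 = stack_base + length (stack_words S)" "regs cfg 17 = c"
    "mem cfg = trace_mem E (stack_words S)" "trace_inv X E x y c S"
    using inv by (auto simp: tb_inv_def)
  define sp where "sp = stack_base + length (stack_words S)"
  have stack: "stack_words (p # S') = stack_words S @ [fst p, snd p]"
    using step(3) by (cases p) (simp add: stack_words_def encode_points_snoc)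
  have "length (stack_words S) + 2 \<le> 2 * E" "c \<le> E"
    using I(7) step(1) by (simp_all add: stack_words_def length_encode_points length_path_breaks trace_inv_def)
  moreover have "fst p \<le> n" "snd p \<le> n" using step(2) by (auto simp: trace_inv_def)
  ultimately have bounds: "sp + 2 < 2 ^ w" "fst p < 2 ^ w" "snd p < 2 ^ w" "c < 2 ^ w"
    using word_large I(1) unfolding sp_def by linarith+
  have mem_push: "(trace_mem E (stack_words S))(sp := fst p, sp + 1 := snd p) =
      trace_mem E (stack_words (p # S'))"
    unfolding stack by (rule ext) (auto simp: trace_mem_def sp_def nth_append)
  have "regs cfg 2 = 1" "regs cfg 20 = 0" using I(2) by (auto simp: const_regs_def)
  with c2 I have "pc c2 = 96" "regs c2 2 = 1" "regs c2 17 = c" "regs c2 18 = sp" "regs c2 20 = 0"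
    "regs c2 23 = fst p" "regs c2 24 = snd p"
    by (auto simp: sp_def)
  from tb_push_block[OF this] show ?thesis
    by (rule reaches_mono) (use c2 I bounds step(1,2) mem_push stack in
        \<open>auto simp: sp_def tb_inv_def wadd_eq wadd_0 wsub_eq intro: const_regs_eqI\<close>)
qed

lemma tb_step:
  assumes inv: "tb_inv E x y c S cfg" and nz: "(x, y) \<noteq> (0, 0)"
  shows "reaches w X cfg (\<lambda>c'. \<exists>x' y' S'. tb_inv E x' y' (c - 1) S' c') (9 + (35 + 8))"
proof -
  have I: "pc cfg = 52" "E \<le> k" "const_regs (regs cfg)" "regs cfg 15 = x" "regs cfg 16 = y"
    "regs cfg 17 = c" "trace_inv X E x y c S"
    using inv by (auto simp: tb_inv_def)
  have R: "regs cfg 2 = 1" "regs cfg 3 = Suc k" "regs cfg 4 = W" "regs cfg 20 = 0"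
    using I(3) by (auto simp: const_regs_def)
  have xy: "x \<le> n" "y \<le> n" "c \<le> E" "x \<le> y + c" "y \<le> x + c"
    using I(7) self_reach_near_diagonal[of X "(x, y)" c] by (auto simp: trace_inv_def)
  define l where "l = (if x \<noteq> y then lcs_len X x y else 0)"
  obtain p S' where step: "0 < c" "pred_choice X c (x - l) (y - l) = Some p"
      "trace_inv X E (fst p) (snd p) (c - 1) (p # S')"
      "path_breaks X (p # S') = p # path_breaks X S"
    using trace_back_step[OF I(7) nz l_def] by blast
  have "l \<le> x" "l \<le> y" using lcs_len_spec(1,2)[OF xy(1,2) refl] by (auto simp: l_def)
  then have slid: "(if x < y \<or> y < x then wsub w x (lcs_len X x y) else x) = x - l"
    "(if x < y \<or> y < x then wsub w y (lcs_len X x y) else y) = y - l"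
    using word_large xy by (auto simp: l_def intro!: wsub_eq)
  have sel: "tb_select w (mem cfg) (wmul w (wsub w c 1) W) (Suc k) (x - l) (y - l) = Some p"
    using inv tb_select_eq[OF step(1) xy(3) I(2)] step(2) \<open>l \<le> x\<close> \<open>l \<le> y\<close> xy
    by (simp add: tb_inv_def)
  define P1 where "P1 c1 \<longleftrightarrow> pc c1 = 61 \<and> mem c1 = mem cfg \<and> outp c1 = outp cfg \<and>
      regs c1 15 = x - l \<and> regs c1 16 = y - l \<and> (\<forall>i. i \<notin> {15, 16, 21} \<longrightarrow> regs c1 i = regs cfg i)"
    for c1
  have "reaches w X cfg P1 9"
    using tb_slide_block[OF I(1,4,5) R(4)]
    by (rule reaches_mono) (use nz slid in \<open>auto simp: P1_def\<close>)
  moreover have "reaches w X c1 (tb_inv E (fst p) (snd p) (c - 1) (p # S')) (35 + 8)"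
    if "P1 c1" for c1
  proof -
    have "pc c1 = 61" "regs c1 2 = 1" "regs c1 3 = Suc k" "regs c1 4 = W" "regs c1 15 = x - l"
      "regs c1 16 = y - l" "regs c1 17 = c" "regs c1 20 = 0"
      using that R I by (auto simp: P1_def)
    from tb_select_block[OF this] have "reaches w X c1 (\<lambda>c2. pc c2 = 96 \<and> mem c2 = mem cfg \<and>
        outp c2 = [] \<and> regs c2 23 = fst p \<and> regs c2 24 = snd p \<and>
        (\<forall>i. i \<notin> {15, 16, 21, 22, 23, 24, 25} \<longrightarrow> regs c2 i = regs cfg i)) 35"
      by (rule reaches_mono) (use sel that inv in \<open>auto simp: P1_def tb_inv_def\<close>)
    then show ?thesis
      by (rule reaches_trans) (use tb_push_step[OF inv step(1,3,4)] in blast)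
  qed
  ultimately have "reaches w X cfg (tb_inv E (fst p) (snd p) (c - 1) (p # S')) (9 + (35 + 8))"
    by (rule reaches_trans)
  then show ?thesis by (rule reaches_mono) auto
qed

definition tb_done :: "nat \<Rightarrow> config \<Rightarrow> bool" where
  "tb_done E cfg \<longleftrightarrow> (\<exists>c S. pc cfg = 104 \<and> const_regs (regs cfg) \<and> regs cfg 19 = stack_base \<and>
     regs cfg 18 = stack_base + length (stack_words S) \<and> mem cfg = trace_mem E (stack_words S) \<and>
     outp cfg = [] \<and> trace_inv X E 0 0 c S)"

lemma tb_exit: "tb_inv E 0 0 c S cfg \<Longrightarrow> reaches w X cfg (tb_done E) 9"
proof -
  assume inv: "tb_inv E 0 0 c S cfg"
  then have "pc cfg = 52" "regs cfg 15 = 0" "regs cfg 16 = 0" "regs cfg 20 = 0"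
    by (auto simp: tb_inv_def const_regs_def)
  from tb_slide_block[OF this] show ?thesis
    by (rule reaches_mono) (use inv in \<open>auto simp: tb_done_def tb_inv_def\<close>)
qed

lemma tb_loop: "tb_inv E x y c S cfg \<Longrightarrow> reaches w X cfg (tb_done E) ((c + 1) * 52)"
proof (induction c arbitrary: x y S cfg)
  case 0
  then have "(x, y) = (0, 0)" using self_reach_cost_0 by (auto simp: tb_inv_def trace_inv_def)
  with tb_exit 0 have "reaches w X cfg (tb_done E) 9" by simp
  then show ?case by (rule reaches_mono) auto
next
  case (Suc c)
  show ?case
  proof (cases "(x, y) = (0, 0)")
    case True
    with tb_exit Suc.prems have "reaches w X cfg (tb_done E) 9" by simp
    then show ?thesis by (rule reaches_mono) auto
  next
    case False
    have "reaches w X cfg (tb_done E) (9 + (35 + 8) + (c + 1) * 52)"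
      by (rule reaches_trans[OF tb_step[OF Suc.prems False]]) (use Suc.IH in auto)
    then show ?thesis by simp
  qed
qed

definition pop_inv :: "nat \<Rightarrow> (nat \<times> nat) list \<Rightarrow> nat \<Rightarrow> config \<Rightarrow> bool" where
  "pop_inv E B i cfg \<longleftrightarrow> pc cfg = 105 \<and> regs cfg 1 = n \<and> regs cfg 2 = 1 \<and>
     regs cfg 19 = stack_base \<and> regs cfg 18 = stack_base + 2 * i \<and>
     mem cfg = trace_mem E (encode_points (rev B)) \<and> i \<le> length B \<and> length B \<le> k \<and>
     outp cfg = 1 # encode_points (take (length B - i) B)"

lemma pop_step:
  assumes inv: "pop_inv E B (Suc i) cfg"
  shows "reaches w X cfg (pop_inv E B i) 10"
proof -
  have I: "pc cfg = 105" "regs cfg 1 = n" "regs cfg 2 = 1" "regs cfg 18 = stack_base + 2 * Suc i"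
    "regs cfg 19 = stack_base" "mem cfg = trace_mem E (encode_points (rev B))"
    "Suc i \<le> length B" "length B \<le> k" "outp cfg = 1 # encode_points (take (length B - Suc i) B)"
    using inv by (auto simp: pop_inv_def)
  define sp where "sp = stack_base + 2 * Suc i"
  have "sp < 2 ^ w" using word_large I(7,8) by (simp add: sp_def)
  then have top: "wsub w (wsub w sp 1) 1 = stack_base + 2 * i"
    "wadd w (stack_base + 2 * i) 1 = stack_base + 2 * i + 1"
    by (simp_all add: wsub_eq wadd_eq sp_def)
  define q where "q = B ! (length B - Suc i)"
  have "i < length (rev B)" using I(7) by simp
  from encode_points_nth[OF this] I(7)
  have popped: "mem cfg (stack_base + 2 * i) = fst q" "mem cfg (stack_base + 2 * i + 1) = snd q"
    by (simp_all add: I(6) trace_mem_def length_encode_points rev_nth q_def)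
  have "take (length B - i) B = take (length B - Suc i) B @ [q]"
    using I(7) by (simp add: q_def take_Suc_conv_app_nth[symmetric] Suc_diff_Suc)
  then have out: "outp cfg @ [fst q, snd q] = 1 # encode_points (take (length B - i) B)"
    using I(9) by (cases q) (simp add: encode_points_snoc)
  from pop_block[OF I(1-3) I(4)[folded sp_def] I(5)] show ?thesis
    by (rule reaches_mono) (use I top popped out in \<open>auto simp: pop_inv_def sp_def\<close>)
qed

lemma pop_loop: "pop_inv E B i cfg \<Longrightarrow>
   reaches w X cfg (\<lambda>c'. pc c' = 108 \<and> outp c' = 1 # encode_points (B @ [(n, n)])) (10 * (i + 1))"
proof (induction i arbitrary: cfg)
  case 0
  then have "pc cfg = 105" "regs cfg 1 = n" "regs cfg 2 = 1" "regs cfg 18 = stack_base"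
    "regs cfg 19 = stack_base"
    by (auto simp: pop_inv_def)
  from pop_block[OF this] show ?case
    by (rule reaches_mono) (use 0 in \<open>auto simp: pop_inv_def encode_points_def\<close>)
next
  case (Suc i)
  from reaches_trans[OF pop_step[OF Suc.prems] Suc.IH] show ?case by simp
qed

lemma init_reaches_row0: "reaches w X (init_config k) (row_inv 0) 8"
proof -
  have arith: "wadd w k 1 = Suc k" "wadd w (Suc k) (Suc k) = 2 * k + 2" "wadd w (2 * k + 2) 1 = W"
    using word_large by (subst wadd_eq; linarith)+
  have row0: "(\<lambda>_. 0)(Suc k := 1) = table_mem (Suc 0 * W)"
    by (rule ext) (auto simp: table_mem_def table_entry_def)
  from init_block[OF w_pos, of X k] show ?thesis
    by (rule reaches_mono)
      (simp_all add: row_inv_def const_regs_def arith[simplified] row0[simplified])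
qed

lemma found_reaches_tb:
  assumes f: "found_inv c"
  shows "reaches w X c (tb_inv (selfed X) n n (selfed X) [(n, n)]) 5"
proof -
  let ?E = "selfed X"
  have I: "pc c = 47" "?E \<le> k" "const_regs (regs c)" "regs c 5 = ?E"
    "mem c = table_mem (Suc ?E * W)" "outp c = []"
    using f by (auto simp: found_inv_def)
  have R: "regs c 1 = n" "regs c 3 = Suc k" "regs c 4 = W" "regs c 20 = 0"
    using I(3) by (auto simp: const_regs_def)
  have "Suc ?E * W \<le> stack_base" using row_end_le[OF I(2)] by simp
  then have below: "a < Suc ?E * W \<Longrightarrow> a < stack_base" for a by linarith
  have mem: "table_mem (Suc ?E * W) = trace_mem ?E []"
  proof
    fix a
    show "table_mem (Suc ?E * W) a = trace_mem ?E [] a"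
      using below[of a] unfolding trace_mem_def table_mem_def by auto
  qed
  have arith: "wadd w n 0 = n" "wadd w ?E 0 = ?E" "wmul w (Suc k) W = stack_base"
    "wadd w stack_base 0 = stack_base"
    using word_large I(2) by (simp_all add: wadd_0 wmul_eq)
  have "trace_inv X ?E n n ?E [(n, n)]"
    using selfed_le_iff_self_reach[of X "selfed X"] by (simp add: trace_inv_def)
  moreover have "stack_words [(n, n)] = []" by (simp add: stack_words_def)
  moreover note found_block[OF I(1) R(1-3) I(4) R(4), of w X]
  ultimately show ?thesis
    by (elim reaches_mono) (use I mem arith in \<open>auto simp: tb_inv_def intro: const_regs_eqI\<close>)
qed

lemma out_reaches_end:
  assumes t: "tb_done E cfg" and E: "E \<le> k"
  shows "reaches w X cfg (\<lambda>c'. \<exists>c S. pc c' = 108 \<and> trace_inv X E 0 0 c S \<and>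
      outp c' = 1 # encode_points (path_breaks X S @ [(n, n)])) (2 + 10 * (k + 1))"
proof -
  obtain c S where I: "pc cfg = 104" "const_regs (regs cfg)" "regs cfg 19 = stack_base"
     "regs cfg 18 = stack_base + length (stack_words S)" "mem cfg = trace_mem E (stack_words S)"
     "outp cfg = []" "trace_inv X E 0 0 c S"
    using t by (auto simp: tb_done_def)
  define B where "B = path_breaks X S"
  have "length B \<le> k" using I(7) E by (simp add: B_def length_path_breaks trace_inv_def)
  have R: "regs cfg 1 = n" "regs cfg 2 = 1" using I(2) by (simp_all add: const_regs_def)
  from out_flag_block[OF I(1) R(2)] have "reaches w X cfg (pop_inv E B (length B)) 2"
    by (rule reaches_mono)
      (use I R \<open>length B \<le> k\<close> in
        \<open>auto simp: pop_inv_def B_def stack_words_def length_encode_points\<close>)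
  from reaches_trans[OF this pop_loop] show ?thesis
    by (rule reaches_mono) (use I(7) \<open>length B \<le> k\<close> in \<open>auto simp: B_def\<close>)
qed

definition final_ok :: "config \<Rightarrow> bool" where
  "final_ok c \<longleftrightarrow> halted prog c \<and>
     (if selfed X \<le> k
      then \<exists>A. optimal_self_alignment X A \<and> outp c = 1 # encode_points (breakpoints X A)
      else outp c = [0])"

lemma found_reaches_final:
  assumes "found_inv c"
  shows "reaches w X c final_ok (5 + ((k + 1) * 52 + (2 + 10 * (k + 1))))"
proof -
  let ?E = "selfed X"
  have E: "?E \<le> k" using assms by (simp add: found_inv_def)
  have tb: "reaches w X c (tb_done ?E) (5 + (k + 1) * 52)"
    using found_reaches_tb[OF assms] tb_loop
    by (rule reaches_trans[THEN reaches_mono]) (use E in auto)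
  have post: "final_ok c'" if "pc c' = 108" "trace_inv X ?E 0 0 c0 S"
    "outp c' = 1 # encode_points (path_breaks X S @ [(n, n)])" for c' c0 S
  proof -
    from trace_inv_origin[OF that(2)]
    have "optimal_self_alignment X S" "breakpoints X S = path_breaks X S @ [(n, n)]"
      using selfed_le_align_cost[of X S] by (auto simp: optimal_self_alignment_def)
    with that(1,3) E show ?thesis by (auto simp: final_ok_def halted_def)
  qed
  have "reaches w X c' final_ok (2 + 10 * (k + 1))" if "tb_done ?E c'" for c'
    using out_reaches_end[OF that E] by (rule reaches_mono) (auto intro: post)
  from reaches_trans[OF tb this] show ?thesis by (rule reaches_mono) auto
qed

lemma prog_correct: "reaches w X (init_config k) final_ok (200 * (k + 1) ^ 2)"
proof -
  have "reaches w X (init_config k) (\<lambda>c. found_inv c \<or> fail_inv c) (8 + (k + 1) * row_time)"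
    using init_reaches_row0 row_loop[of 0] by (auto intro: reaches_trans)
  moreover have "reaches w X c final_ok (5 + ((k + 1) * 52 + (2 + 10 * (k + 1))))"
    if "found_inv c \<or> fail_inv c" for c
    using that found_reaches_final reaches_now[of final_ok c]
    by (auto simp: fail_inv_def final_ok_def halted_def)
  ultimately have "reaches w X (init_config k) final_ok
      (8 + (k + 1) * row_time + (5 + ((k + 1) * 52 + (2 + 10 * (k + 1)))))"
    by (rule reaches_trans)
  moreover have "8 + (k + 1) * row_time + (5 + ((k + 1) * 52 + (2 + 10 * (k + 1)))) \<le>
      200 * (k + 1) ^ 2"
    by (simp add: row_time_def power2_eq_square algebra_simps)
  ultimately show ?thesis by (rule reaches_mono)
qed

end

lemma four_mul_square_le_pow4: "2 \<le> N \<Longrightarrow> 4 * N * N \<le> (N::nat) ^ 4"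
  using mult_le_mono[of 2 N 2 N] by (simp add: power4_eq_xxxx mult.assoc)

theorem lemma4p5:
  "\<exists>(P :: instr list) (c :: nat) (d :: nat).
     \<forall>(w :: nat) (X :: nat list) (k :: nat).
       (length X + k + 2) ^ d \<le> 2 ^ w \<and> (\<forall>a \<in> set X. a < 2 ^ w) \<longrightarrow>
       (\<exists>t \<le> c * (k + 1) ^ 2.
          halted P (run P w X k t) \<and>
          (if selfed X \<le> k
           then (\<exists>A. optimal_self_alignment X A \<and>
                     outp (run P w X k t) = 1 # encode_points (breakpoints X A))
           else outp (run P w X k t) = [0]))"
proof (rule exI[of _ prog], rule exI[of _ 200], rule exI[of _ 4], intro allI impI)
  fix w :: nat and X :: "nat list" and k :: nat
  assume "(length X + k + 2) ^ 4 \<le> 2 ^ w \<and> (\<forall>a \<in> set X. a < 2 ^ w)"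
  then interpret lv_machine w X k
    using four_mul_square_le_pow4[of "length X + k + 2"] by unfold_locales simp
  from prog_correct show "\<exists>t \<le> 200 * (k + 1) ^ 2. halted prog (run prog w X k t) \<and>
      (if selfed X \<le> k
       then \<exists>A. optimal_self_alignment X A \<and> outp (run prog w X k t) = 1 # encode_points (breakpoints X A)
       else outp (run prog w X k t) = [0])"
    by (auto simp: reaches_def run_def final_ok_def)
qed

end
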